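(* Let $X$ be a quasi-tree with basepoint $x_0$, and let $(T_X,d^* )$ be its end-approximating tree with basepoint $[x_0]$. For every $a>1$ there exists a visual metric $d_{\partial X}$ on $\partial X$ with visual parameter $a$ such that $(\partial X,d_{\partial X})$ is isometric to $(\partial T_X,d_{\partial T_X})$, where $d_{\partial T_X}(p,q)=a^{-(p,q)_{[x_0]}}$ is the standard visual metric on $\partial T_X$ with parameter $a$.
   Context: A quasi-tree is a geodesic metric space quasi-isometric to a simplicial tree. End-approximating tree: with $(x,y)_{x_0}=\frac12(d(x_0,x)+d(x_0,y)-d(x,y))$, let $(x,y)'_{x_0}=\sup\min_{1\leqslant i\leqslant n-1}(x_i,x_{i+1})_{x_0}$, the supremum over all finite sequences $x=x_1,\ldots,x_n=y$ in $X$, and $d'(x,y)=d(x_0,x)+d(x_0,y)-2(x,y)'_{x_0}$; $T_X=X/\sim$ with $x\sim y$ iff $d'(x,y)=0$, and $d^*([x],[y])=d'(x,y)$ (it is an $\mathbb{R}$-tree). For a hyperbolic metric space $Y$ with basepoint $y_0$: a sequence $(x_n)$ converges to infinity if $(x_i,x_j)_{y_0}\to\infty$ as $i,j\to\infty$; two such sequences $(x_n),(y_n)$ are equivalent if $\liminf_{i,j\to\infty}(x_i,y_j)_{y_0}=\infty$; the sequential boundary $\partial Y$ is the set of equivalence classes. For $p,q\in\partial Y$, $(p,q)_{y_0}=\sup\{\liminf_{i,j\to\infty}(x_i,y_j)_{y_0}: (x_i)\in p,\ (y_j)\in q\}$. A metric $d_{\partial Y}$ on $\partial Y$ is a visual metric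 with parameter $a>1$ if there is $K\geqslant 1$ with $\frac1K a^{-(p,q)_{y_0}}\leqslant d_{\partial Y}(p,q)\leqslant K a^{-(p,q)_{y_0}}$ for all $p,q\in\partial Y$. *)

theory Defs
  imports "HOL-Analysis.Analysis"
begin

definition geodesic_space :: "'a set \<Rightarrow> ('a \<Rightarrow> 'a \<Rightarrow> real) \<Rightarrow> bool" where
  "geodesic_space X d \<longleftrightarrow>
     (\<forall>x\<in>X. \<forall>y\<in>X. \<exists>\<gamma> :: real \<Rightarrow> 'a. \<gamma> 0 = x \<and> \<gamma> (d x y) = y \<and>
        (\<forall>t\<in>{0..d x y}. \<gamma> t \<in> X) \<and>
        (\<forall>s\<in>{0..d x y}. \<forall>t\<in>{0..d x y}. d (\<gamma> s) (\<gamma> t) = \<bar>s - t\<bar>))"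

definition quasi_isometric ::
  "'a set \<Rightarrow> ('a \<Rightarrow> 'a \<Rightarrow> real) \<Rightarrow> 'b set \<Rightarrow> ('b \<Rightarrow> 'b \<Rightarrow> real) \<Rightarrow> bool" where
  "quasi_isometric X d Y e \<longleftrightarrow>
     (\<exists>f. f ` X \<subseteq> Y \<and> (\<exists>lam C. lam \<ge> 1 \<and> C \<ge> 0 \<and>
        (\<forall>x\<in>X. \<forall>y\<in>X. d x y / lam - C \<le> e (f x) (f y) \<and> e (f x) (f y) \<le> lam * d x y + C) \<and>
        (\<forall>z\<in>Y. \<exists>x\<in>X. e z (f x) \<le> C)))"

definition isometric_spaces ::
  "'a set \<Rightarrow> ('a \<Rightarrow> 'a \<Rightarrow> real) \<Rightarrow> 'b set \<Rightarrow> ('b \<Rightarrow> 'b \<Rightarrow> real) \<Rightarrow> bool" where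
  "isometric_spaces A dA B dB \<longleftrightarrow>
     (\<exists>\<phi>. bij_betw \<phi> A B \<and> (\<forall>p\<in>A. \<forall>q\<in>A. dB (\<phi> p) (\<phi> q) = dA p q))"

definition is_walk :: "('b \<Rightarrow> 'b \<Rightarrow> bool) \<Rightarrow> 'b list \<Rightarrow> 'b \<Rightarrow> 'b \<Rightarrow> bool" where
  "is_walk E xs x y \<longleftrightarrow> xs \<noteq> [] \<and> hd xs = x \<and> last xs = y \<and>
     (\<forall>i < length xs - 1. E (xs ! i) (xs ! Suc i))"

definition graph_dist :: "('b \<Rightarrow> 'b \<Rightarrow> bool) \<Rightarrow> 'b \<Rightarrow> 'b \<Rightarrow> real" where
  "graph_dist E x y = real (LEAST n. \<exists>xs. is_walk E xs x y \<and> length xs = Suc n)"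

definition simplicial_tree :: "'b set \<Rightarrow> ('b \<Rightarrow> 'b \<Rightarrow> bool) \<Rightarrow> bool" where
  "simplicial_tree V E \<longleftrightarrow> V \<noteq> {} \<and>
     (\<forall>u v. E u v \<longrightarrow> u \<in> V \<and> v \<in> V) \<and>
     (\<forall>u v. E u v \<longrightarrow> E v u) \<and> (\<forall>u. \<not> E u u) \<and>
     (\<forall>u\<in>V. \<forall>v\<in>V. \<exists>xs. is_walk E xs u v) \<and>
     (\<forall>u\<in>V. \<forall>v\<in>V. \<forall>xs ys. is_walk E xs u v \<and> distinct xs \<and> is_walk E ys u v \<and> distinct ys
        \<longrightarrow> xs = ys)"

definition gromov_product :: "('a \<Rightarrow> 'a \<Rightarrow> real) \<Rightarrow> 'a \<Rightarrow> 'a \<Rightarrow> 'a \<Rightarrow> real" where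
  "gromov_product d w x y = (d w x + d w y - d x y) / 2"

definition chain_product :: "'a set \<Rightarrow> ('a \<Rightarrow> 'a \<Rightarrow> real) \<Rightarrow> 'a \<Rightarrow> 'a \<Rightarrow> 'a \<Rightarrow> real" where
  "chain_product X d w x y =
     Sup {Min ((\<lambda>i. gromov_product d w (xs ! i) (xs ! Suc i)) ` {..<length xs - 1}) | xs.
            length xs \<ge> 2 \<and> hd xs = x \<and> last xs = y \<and> set xs \<subseteq> X}"

definition ea_dist :: "'a set \<Rightarrow> ('a \<Rightarrow> 'a \<Rightarrow> real) \<Rightarrow> 'a \<Rightarrow> 'a \<Rightarrow> 'a \<Rightarrow> real" where
  "ea_dist X d w x y = d w x + d w y - 2 * chain_product X d w x y"

definition ea_class :: "'a set \<Rightarrow> ('a \<Rightarrow> 'a \<Rightarrow> real) \<Rightarrow> 'a \<Rightarrow> 'a \<Rightarrow> 'a set" where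
  "ea_class X d w x = {y \<in> X. ea_dist X d w x y = 0}"

definition ea_tree :: "'a set \<Rightarrow> ('a \<Rightarrow> 'a \<Rightarrow> real) \<Rightarrow> 'a \<Rightarrow> 'a set set" where
  "ea_tree X d w = ea_class X d w ` X"

definition ea_metric :: "'a set \<Rightarrow> ('a \<Rightarrow> 'a \<Rightarrow> real) \<Rightarrow> 'a \<Rightarrow> 'a set \<Rightarrow> 'a set \<Rightarrow> real" where
  "ea_metric X d w P Q = ea_dist X d w (SOME x. x \<in> P) (SOME y. y \<in> Q)"

definition conv_infty :: "'a set \<Rightarrow> ('a \<Rightarrow> 'a \<Rightarrow> real) \<Rightarrow> 'a \<Rightarrow> (nat \<Rightarrow> 'a) \<Rightarrow> bool" where
  "conv_infty S d w xs \<longleftrightarrow> (\<forall>n. xs n \<in> S) \<and>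
     (\<forall>M. \<exists>N. \<forall>i\<ge>N. \<forall>j\<ge>N. gromov_product d w (xs i) (xs j) \<ge> M)"

definition seq_equiv :: "('a \<Rightarrow> 'a \<Rightarrow> real) \<Rightarrow> 'a \<Rightarrow> (nat \<Rightarrow> 'a) \<Rightarrow> (nat \<Rightarrow> 'a) \<Rightarrow> bool" where
  "seq_equiv d w xs ys \<longleftrightarrow>
     Liminf (sequentially \<times>\<^sub>F sequentially) (\<lambda>(i, j). ereal (gromov_product d w (xs i) (ys j))) = \<infinity>"

definition seq_boundary :: "'a set \<Rightarrow> ('a \<Rightarrow> 'a \<Rightarrow> real) \<Rightarrow> 'a \<Rightarrow> (nat \<Rightarrow> 'a) set set" where
  "seq_boundary S d w =
     {{ys. conv_infty S d w ys \<and> seq_equiv d w xs ys} | xs. conv_infty S d w xs}"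

definition boundary_product ::
  "('a \<Rightarrow> 'a \<Rightarrow> real) \<Rightarrow> 'a \<Rightarrow> (nat \<Rightarrow> 'a) set \<Rightarrow> (nat \<Rightarrow> 'a) set \<Rightarrow> ereal" where
  "boundary_product d w p q =
     Sup {Liminf (sequentially \<times>\<^sub>F sequentially) (\<lambda>(i, j). ereal (gromov_product d w (xs i) (ys j)))
          | xs ys. xs \<in> p \<and> ys \<in> q}"

definition vis_pow :: "real \<Rightarrow> ereal \<Rightarrow> real" where
  "vis_pow a r = (if r = \<infinity> then 0 else a powr (- real_of_ereal r))"

definition visual_metric ::
  "'a set \<Rightarrow> ('a \<Rightarrow> 'a \<Rightarrow> real) \<Rightarrow> 'a \<Rightarrow> real \<Rightarrow> ((nat \<Rightarrow> 'a) set \<Rightarrow> (nat \<Rightarrow> 'a) set \<Rightarrow> real) \<Rightarrow> bool" where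
  "visual_metric S d w a dB \<longleftrightarrow> Metric_space (seq_boundary S d w) dB \<and>
     (\<exists>K\<ge>1. \<forall>p\<in>seq_boundary S d w. \<forall>q\<in>seq_boundary S d w.
        vis_pow a (boundary_product d w p q) / K \<le> dB p q \<and>
        dB p q \<le> K * vis_pow a (boundary_product d w p q))"

end

theory Submission
  imports Defs "HOL-Library.Sublist"
begin

text \<open>
  The chain product \<open>(x,y)'\<close> always dominates the Gromov product \<open>(x,y)\<close>, and concatenating
  chains shows that it satisfies the ultrametric inequality; since the Gromov product of \<open>T\<^sub>X\<close>
  at \<open>[x\<^sub>0]\<close> is exactly \<open>(x,y)'\<close>, the tree \<open>T\<^sub>X\<close> is 0-hyperbolic. In a quasi-tree the two
  products differ by at most a constant \<open>c\<close>. Indeed, the image in the tree of a geodesic passes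
  close to the image of each of its points (a Morse-type estimate that uses 0-hyperbolicity of
  the tree), so the geodesics of a chain whose links all have Gromov product much larger than
  \<open>(x,y)\<close> would all avoid a point of \<open>[x,y]\<close> close to \<open>x\<^sub>0\<close>, which is impossible.

  Consequently \<open>x \<mapsto> [x]\<close> induces a bijection of sequential boundaries that changes boundary
  Gromov products by at most \<open>c\<close>. As the boundary Gromov product of \<open>T\<^sub>X\<close> is ultrametric,
  \<open>a^(-(p,q))\<close> is a metric on \<open>\<partial>T\<^sub>X\<close>; pulled back to \<open>\<partial>X\<close> it is a visual metric with constant
  \<open>K = a\<^sup>c\<close>.
\<close>

section \<open>Gromov products in metric spaces\<close>

context Metric_space
begin

lemma gromov_product_commute: "gromov_product d w x y = gromov_product d w y x"
  unfolding gromov_product_def by (simp add: commute)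

lemma gromov_product_self: "w \<in> M \<Longrightarrow> x \<in> M \<Longrightarrow> gromov_product d w x x = d w x"
  unfolding gromov_product_def by simp

lemma gromov_product_basepoint: "w \<in> M \<Longrightarrow> gromov_product d w w x = 0"
  unfolding gromov_product_def by simp

lemma gromov_product_le_dist:
  "w \<in> M \<Longrightarrow> x \<in> M \<Longrightarrow> y \<in> M \<Longrightarrow> gromov_product d w x y \<le> d w x"
  unfolding gromov_product_def using triangle[of w x y] by simp

lemma gromov_product_ge_dist_diff:
  "w \<in> M \<Longrightarrow> x \<in> M \<Longrightarrow> y \<in> M \<Longrightarrow> d w y - d x y \<le> gromov_product d w x y"
  unfolding gromov_product_def using triangle[of w x y] by simp

lemma gromov_product_nonneg:
  "w \<in> M \<Longrightarrow> x \<in> M \<Longrightarrow> y \<in> M \<Longrightarrow> 0 \<le> gromov_product d w x y"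
  unfolding gromov_product_def using triangle[of x w y] commute[of x w] by simp

lemma gromov_product_le_dist_between:
  assumes "w \<in> M" "a \<in> M" "b \<in> M" "q \<in> M" "d a q + d q b = d a b"
  shows "gromov_product d w a b \<le> d w q"
  using assms(5) triangle[OF assms(1,4,2)] triangle[OF assms(1,4,3)] commute[of q a]
  unfolding gromov_product_def by argo

lemma dist_le_gromov_product_near_side:
  assumes "w \<in> M" "x \<in> M" "p \<in> M" "q \<in> M"
    and "d x p = (d x y + d x w - d y w) / 2" and "d x q + d q w = d x w" and "d p q \<le> r"
  shows "d w p \<le> gromov_product d w x y + 2 * r"
  using assms(5-7) triangle[OF assms(1,4,3)] triangle[OF assms(2,4,3)] commute[of w q] commute[of w x]
    commute[of w y] commute[of q p]
  unfolding gromov_product_def by argo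

end

lemma ultrametric_chain:
  fixes g :: "'a \<Rightarrow> 'a \<Rightarrow> real"
  assumes ultra: "\<And>x y z. x \<in> A \<Longrightarrow> y \<in> A \<Longrightarrow> z \<in> A \<Longrightarrow> min (g x y) (g y z) \<le> g x z"
    and in_A: "\<And>k. k \<le> K \<Longrightarrow> z k \<in> A"
    and start: "R \<le> g (z 0) (z 0)" and links: "\<And>k. k < K \<Longrightarrow> R \<le> g (z k) (z (Suc k))"
  shows "R \<le> g (z 0) (z K)"
  using in_A links
proof (induction K)
  case (Suc K)
  have "min (g (z 0) (z K)) (g (z K) (z (Suc K))) \<le> g (z 0) (z (Suc K))"
    using Suc.prems(1) by (intro ultra) auto
  then show ?case using Suc by fastforce
qed (use start in simp)

lemma successively_append_tl:
  assumes "successively P xs" "successively P ys" "xs \<noteq> []" "last xs = hd ys"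
  shows "successively P (xs @ tl ys)"
  using assms by (cases ys) (auto simp: successively_append_iff successively_Cons)

section \<open>Walks and simplicial trees\<close>

lemma length_longest_common_prefix_ultrametric:
  "min (length (longest_common_prefix xs ys)) (length (longest_common_prefix ys zs))
     \<le> length (longest_common_prefix xs zs)"
proof -
  let ?p = "longest_common_prefix xs ys" and ?q = "longest_common_prefix ys zs"
  have common: "prefix ?p xs" "prefix ?p ys" "prefix ?q ys" "prefix ?q zs"
    by (simp_all add: longest_common_prefix_prefix1 longest_common_prefix_prefix2)
  show ?thesis
  proof (cases "length ?p \<le> length ?q")
    case True
    then have "prefix ?p ?q" using common prefix_length_prefix by blast
    then have "prefix ?p (longest_common_prefix xs zs)"
      using common by (meson longest_common_prefix_max_prefix prefix_order.trans)
    then show ?thesis using True by (simp add: prefix_length_le)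
  next
    case False
    then have "prefix ?q ?p" using common prefix_length_prefix by (metis nle_le)
    then have "prefix ?q (longest_common_prefix xs zs)"
      using common by (meson longest_common_prefix_max_prefix prefix_order.trans)
    then show ?thesis using False by (simp add: prefix_length_le)
  qed
qed

lemma is_walk_iff_successively:
  "is_walk E xs x y \<longleftrightarrow> xs \<noteq> [] \<and> hd xs = x \<and> last xs = y \<and> successively E xs"
  unfolding is_walk_def successively_conv_nth by (auto simp: less_diff_conv)

lemma walk_prefix:
  assumes "is_walk E xs u v" "prefix ys xs" "ys \<noteq> []"
  shows "is_walk E ys u (last ys)"
proof -
  obtain zs where "xs = ys @ zs" using assms(2) prefix_def by blast
  then show ?thesis using assms unfolding is_walk_iff_successively
    by (auto simp: successively_append_iff)
qed

lemma successively_rev_sym: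
  assumes "\<And>x y. P x y \<longleftrightarrow> P y x"
  shows "successively P (rev xs) \<longleftrightarrow> successively P xs"
proof -
  have "(\<lambda>x y. P y x) = P" by (intro ext) (use assms in blast)
  then show ?thesis
    using successively_rev[of P xs] arg_cong[where f="\<lambda>Q. successively Q xs"] by metis
qed

lemma walk_rev:
  assumes "\<And>u v. E u v \<Longrightarrow> E v u"
  shows "is_walk E (rev xs) v u \<longleftrightarrow> is_walk E xs u v"
proof -
  have "successively E (rev xs) \<longleftrightarrow> successively E xs"
    using assms by (intro successively_rev_sym) blast
  then show ?thesis unfolding is_walk_iff_successively by (auto simp: hd_rev last_rev)
qed

lemma walk_imp_distinct_walk:
  assumes "is_walk E xs u v"
  shows "\<exists>ys. is_walk E ys u v \<and> distinct ys \<and> length ys \<le> length xs"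
  using assms
proof (induction "length xs" arbitrary: xs rule: less_induct)
  case less
  show ?case
  proof (cases "distinct xs")
    case False
    then obtain as bs cs y where xs: "xs = as @ [y] @ bs @ [y] @ cs"
      using not_distinct_decomp by blast
    have "xs = (as @ [y]) @ (bs @ y # cs)" "xs = (as @ y # bs) @ (y # cs)"
      using xs by simp_all
    then have "successively E (as @ [y])" "successively E (y # cs)"
      using less.prems unfolding is_walk_iff_successively by (metis successively_append_iff)+
    then have "successively E (as @ y # cs)"
      by (auto simp: successively_append_iff)
    then have "is_walk E (as @ y # cs) u v"
      using less.prems unfolding is_walk_iff_successively xs
      by (cases as; cases cs) auto
    moreover have "length (as @ y # cs) < length xs" using xs by simp
    ultimately show ?thesis using less.hyps by (meson order.strict_implies_order order_trans)
  qed (use less.prems in blast)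
qed

lemma graph_dist_refl: "graph_dist E u u = 0"
proof -
  have "is_walk E [u] u u" unfolding is_walk_def by simp
  then have "(LEAST n. \<exists>xs. is_walk E xs u u \<and> length xs = Suc n) = 0"
    by (intro Least_eq_0) force
  then show ?thesis unfolding graph_dist_def by simp
qed

lemma graph_dist_commute:
  assumes "\<And>u v. E u v \<Longrightarrow> E v u"
  shows "graph_dist E u v = graph_dist E v u"
proof -
  have reverse: "\<exists>ys. is_walk E ys b a \<and> length ys = n" if "is_walk E xs a b" "length xs = n" for xs a b n
    using that walk_rev[where xs=xs, OF assms] by (intro exI[of _ "rev xs"]) auto
  have "(\<exists>xs. is_walk E xs u v \<and> length xs = Suc n) \<longleftrightarrow> (\<exists>xs. is_walk E xs v u \<and> length xs = Suc n)" for n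
    using reverse by blast
  then show ?thesis unfolding graph_dist_def by simp
qed

lemma walk_suffix:
  assumes "is_walk E (ps @ qs) u v" "ps \<noteq> []"
  shows "is_walk E (last ps # qs) (last ps) v"
proof -
  obtain ps' c where ps: "ps = ps' @ [c]" using assms(2) by (cases ps rule: rev_cases) auto
  have "successively E (ps' @ (c # qs))"
    using assms(1) unfolding is_walk_iff_successively ps by simp
  then have "successively E (c # qs)" using successively_append_iff by blast
  moreover have "last (c # qs) = v"
    using assms unfolding is_walk_iff_successively ps by (cases qs) auto
  ultimately show ?thesis unfolding is_walk_iff_successively ps by simp
qed

lemma walk_append:
  assumes "is_walk E xs u v" "is_walk E ys v w"
  shows "is_walk E (xs @ tl ys) u w"
  using assms successively_append_tl[of E xs ys] unfolding is_walk_iff_successively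
  by (cases ys) auto

context
  fixes V :: "'b set" and E :: "'b \<Rightarrow> 'b \<Rightarrow> bool"
  assumes tree: "simplicial_tree V E"
begin

lemma tree_edge_sym: "E u v \<Longrightarrow> E v u"
  using tree unfolding simplicial_tree_def by blast

lemma tree_edge_in_vertices: "E u v \<Longrightarrow> u \<in> V \<and> v \<in> V"
  using tree unfolding simplicial_tree_def by blast

lemma tree_walk_rev: "is_walk E (rev xs) v u \<longleftrightarrow> is_walk E xs u v"
  by (rule walk_rev) (fact tree_edge_sym)

lemma tree_graph_dist_commute: "graph_dist E u v = graph_dist E v u"
  by (rule graph_dist_commute) (fact tree_edge_sym)

lemma walk_in_vertices: "is_walk E xs u v \<Longrightarrow> u \<in> V \<Longrightarrow> set xs \<subseteq> V"
proof (induction xs arbitrary: u rule: induct_list012)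
  case (3 x y zs)
  then have "is_walk E (y # zs) y v" "E x y"
    unfolding is_walk_iff_successively by auto
  moreover have "y \<in> V" using \<open>E x y\<close> tree_edge_in_vertices by blast
  ultimately show ?case using 3 unfolding is_walk_def by auto
qed (auto simp: is_walk_def)

lemma distinct_walk_unique:
  "u \<in> V \<Longrightarrow> v \<in> V \<Longrightarrow> is_walk E xs u v \<Longrightarrow> distinct xs \<Longrightarrow>
   is_walk E ys u v \<Longrightarrow> distinct ys \<Longrightarrow> xs = ys"
  using tree unfolding simplicial_tree_def by blast

lemma graph_dist_distinct_walk:
  assumes u: "u \<in> V" and walk: "is_walk E xs u v" and dist: "distinct xs"
  shows "graph_dist E u v = real (length xs - 1)"
proof -
  let ?P = "\<lambda>n. \<exists>ys. is_walk E ys u v \<and> length ys = Suc n"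
  have "xs \<noteq> []" "v = last xs" using walk unfolding is_walk_def by auto
  then have v: "v \<in> V" using walk_in_vertices[OF walk u] last_in_set by blast
  have P: "?P (length xs - 1)" using walk \<open>xs \<noteq> []\<close> by (intro exI[of _ xs]) auto
  then have "?P (Least ?P)" by (rule LeastI)
  then obtain ys where ys: "is_walk E ys u v" "length ys = Suc (Least ?P)" by blast
  obtain zs where zs: "is_walk E zs u v" "distinct zs" "length zs \<le> length ys"
    using walk_imp_distinct_walk[OF ys(1)] by blast
  have "zs = xs" using distinct_walk_unique[OF u v zs(1,2) walk dist] .
  moreover have "Least ?P \<le> length xs - 1" using P by (rule Least_le)
  ultimately have "Least ?P = length xs - 1" using zs(3) ys(2) by simp
  then show ?thesis unfolding graph_dist_def by simp
qed

definition tree_path :: "'b \<Rightarrow> 'b \<Rightarrow> 'b list" where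
  "tree_path u v = (SOME xs. is_walk E xs u v \<and> distinct xs)"

lemma tree_connected: "u \<in> V \<Longrightarrow> v \<in> V \<Longrightarrow> \<exists>xs. is_walk E xs u v"
  using tree unfolding simplicial_tree_def by blast

lemma tree_path: "u \<in> V \<Longrightarrow> v \<in> V \<Longrightarrow> is_walk E (tree_path u v) u v \<and> distinct (tree_path u v)"
  unfolding tree_path_def using tree_connected walk_imp_distinct_walk by (metis (no_types, lifting) someI_ex)

lemma graph_dist_tree_path:
  assumes u: "u \<in> V" and v: "v \<in> V"
  shows "graph_dist E u v = real (length (tree_path u v)) - 1"
proof -
  have "tree_path u v \<noteq> []" using tree_path[OF u v] unfolding is_walk_def by blast
  then have "1 \<le> length (tree_path u v)" by (simp add: Suc_le_eq)
  moreover have "graph_dist E u v = real (length (tree_path u v) - 1)"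
    using graph_dist_distinct_walk[OF u] tree_path[OF u v] by blast
  ultimately show ?thesis by (simp add: of_nat_diff)
qed

text \<open>If the tails met at \<open>z\<close>, the initial segments of both walks up to \<open>z\<close> would be equal by
  uniqueness of paths, giving a common prefix longer than \<open>p\<close>.\<close>

lemma branch_tails_disjoint:
  assumes w0: "w0 \<in> V" and a: "is_walk E (p @ as) w0 u" "distinct (p @ as)"
    and b: "is_walk E (p @ bs) w0 v" "distinct (p @ bs)"
    and p: "p = longest_common_prefix (p @ as) (p @ bs)"
  shows "set as \<inter> set bs = {}"
proof (rule ccontr)
  assume "set as \<inter> set bs \<noteq> {}"
  then obtain z where "z \<in> set as" "z \<in> set bs" by blast
  then obtain i j where i: "i < length as" and j: "j < length bs" and ij: "as ! i = bs ! j"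
    by (metis in_set_conv_nth)
  define qa where "qa = p @ take (Suc i) as"
  define qb where "qb = p @ take (Suc j) bs"
  have prefixes: "prefix qa (p @ as)" "prefix qb (p @ bs)"
    unfolding qa_def qb_def by (simp_all add: take_is_prefix)
  have "is_walk E qa w0 (as ! i)" "is_walk E qb w0 (as ! i)"
    using walk_prefix[OF a(1) prefixes(1)] walk_prefix[OF b(1) prefixes(2)] i j ij
    unfolding qa_def qb_def by (simp_all add: take_Suc_conv_app_nth)
  moreover have "distinct qa" "distinct qb"
    using a(2) b(2) unfolding qa_def qb_def by (auto dest: in_set_takeD)
  moreover have "as ! i \<in> V" using walk_in_vertices[OF a(1) w0] i by auto
  ultimately have "qa = qb" using distinct_walk_unique w0 by blast
  then have "prefix qa (longest_common_prefix (p @ as) (p @ bs))"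
    using prefixes by (intro longest_common_prefix_max_prefix) simp_all
  then have "prefix qa p" using p by simp
  then show False using prefix_length_le[of qa p] i unfolding qa_def by simp
qed

lemma graph_dist_branch:
  assumes w0: "w0 \<in> V" and a: "is_walk E a w0 u" "distinct a" and b: "is_walk E b w0 v" "distinct b"
  shows "graph_dist E u v = real (length a) + real (length b) - 2 * real (length (longest_common_prefix a b))"
proof -
  define p where "p = longest_common_prefix a b"
  obtain as where as: "a = p @ as"
    using longest_common_prefix_prefix1[of a b] unfolding p_def prefix_def by blast
  obtain bs where bs: "b = p @ bs"
    using longest_common_prefix_prefix2[of a b] unfolding p_def prefix_def by blast
  have "a \<noteq> []" "b \<noteq> []" "hd a = hd b" using a(1) b(1) unfolding is_walk_def by auto
  then have "p \<noteq> []" unfolding p_def by (cases a; cases b) auto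
  define c where "c = last p"
  \<comment> \<open>the path from \<open>u\<close> to \<open>v\<close> runs back along \<open>a\<close> to the branch vertex \<open>c\<close>, then along \<open>b\<close>\<close>
  have "is_walk E (c # as) c u" "is_walk E (c # bs) c v"
    unfolding c_def using walk_suffix[OF a(1)[unfolded as] \<open>p \<noteq> []\<close>]
      walk_suffix[OF b(1)[unfolded bs] \<open>p \<noteq> []\<close>] by simp_all
  then have walk: "is_walk E (rev (c # as) @ tl (c # bs)) u v"
    using walk_append[of E "rev (c # as)" u c "c # bs" v] tree_walk_rev[of "c # as" u c] by blast
  have "set as \<inter> set bs = {}"
    using branch_tails_disjoint[OF w0] a b p_def unfolding as bs by blast
  moreover have "c \<in> set p" unfolding c_def using \<open>p \<noteq> []\<close> by simp
  ultimately have "distinct (rev (c # as) @ tl (c # bs))"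
    using a(2) b(2) unfolding as bs by auto
  moreover have "u \<in> V"
    using walk_in_vertices[OF a(1) w0] a(1) last_in_set unfolding is_walk_def by blast
  ultimately have "graph_dist E u v = real (length as + length bs)"
    using graph_dist_distinct_walk walk by simp
  then show ?thesis unfolding p_def[symmetric] using as bs by simp
qed

lemma graph_dist_metric: "Metric_space V (graph_dist E)"
proof
  fix u v show "graph_dist E u v = graph_dist E v u"
    by (rule tree_graph_dist_commute)
next
  fix u v assume u: "u \<in> V" and v: "v \<in> V"
  show "graph_dist E u v = 0 \<longleftrightarrow> u = v"
  proof
    assume "graph_dist E u v = 0"
    then have "length (tree_path u v) = 1" using graph_dist_tree_path[OF u v] by simp
    then obtain x where "tree_path u v = [x]" by (auto simp: length_Suc_conv)
    then show "u = v" using tree_path[OF u v] unfolding is_walk_def by auto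
  qed (simp add: graph_dist_refl)
next
  fix u v w assume u: "u \<in> V" and v: "v \<in> V" and w: "w \<in> V"
  let ?a = "tree_path v u" and ?b = "tree_path v w"
  have "1 \<le> length (longest_common_prefix ?a ?b)"
    using tree_path[OF v u] tree_path[OF v w] unfolding is_walk_def
    by (cases ?a; cases ?b) auto
  then have "graph_dist E u w \<le> graph_dist E v u + graph_dist E v w"
    using graph_dist_branch[OF v, of ?a u ?b w] tree_path[OF v u] tree_path[OF v w]
      graph_dist_tree_path[OF v u] graph_dist_tree_path[OF v w] by simp
  then show "graph_dist E u w \<le> graph_dist E u v + graph_dist E v w"
    using tree_graph_dist_commute[of u v] by simp
qed (simp add: graph_dist_def)

lemma tree_gromov_product:
  assumes "w0 \<in> V" "u \<in> V" "v \<in> V"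
  shows "gromov_product (graph_dist E) w0 u v
    = real (length (longest_common_prefix (tree_path w0 u) (tree_path w0 v))) - 1"
  using graph_dist_branch[OF assms(1), of "tree_path w0 u" u "tree_path w0 v" v]
    tree_path[OF assms(1,2)] tree_path[OF assms(1,3)]
    graph_dist_tree_path[OF assms(1,2)] graph_dist_tree_path[OF assms(1,3)]
  unfolding gromov_product_def by simp

lemma tree_gromov_product_ultrametric:
  assumes "w0 \<in> V" "u \<in> V" "v \<in> V" "w \<in> V"
  shows "min (gromov_product (graph_dist E) w0 u v) (gromov_product (graph_dist E) w0 v w)
    \<le> gromov_product (graph_dist E) w0 u w"
  using length_longest_common_prefix_ultrametric[of "tree_path w0 u" "tree_path w0 v" "tree_path w0 w"]
  unfolding tree_gromov_product[OF assms(1,2,3)] tree_gromov_product[OF assms(1,3,4)]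
    tree_gromov_product[OF assms(1,2,4)] by linarith

end

section \<open>The chain product and the end-approximating tree\<close>

definition chain_value :: "('a \<Rightarrow> 'a \<Rightarrow> real) \<Rightarrow> 'a \<Rightarrow> 'a list \<Rightarrow> real" where
  "chain_value d w xs = Min ((\<lambda>i. gromov_product d w (xs ! i) (xs ! Suc i)) ` {..<length xs - 1})"

definition chain_values :: "'a set \<Rightarrow> ('a \<Rightarrow> 'a \<Rightarrow> real) \<Rightarrow> 'a \<Rightarrow> 'a \<Rightarrow> 'a \<Rightarrow> real set" where
  "chain_values X d w x y =
     {chain_value d w xs | xs. 2 \<le> length xs \<and> hd xs = x \<and> last xs = y \<and> set xs \<subseteq> X}"

lemma chain_product_eq_Sup: "chain_product X d w x y = Sup (chain_values X d w x y)"
  unfolding chain_product_def chain_values_def chain_value_def by simp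

lemma le_chain_value_iff:
  assumes "2 \<le> length xs"
  shows "m \<le> chain_value d w xs \<longleftrightarrow> successively (\<lambda>u v. m \<le> gromov_product d w u v) xs"
proof -
  have "0 \<in> {..<length xs - 1}" using assms by simp
  then have "{..<length xs - 1} \<noteq> {}" by blast
  then show ?thesis unfolding chain_value_def successively_conv_nth
    by (auto simp: Min_ge_iff less_diff_conv)
qed

lemma chain_value_le_link:
  "2 \<le> length xs \<Longrightarrow> Suc i < length xs \<Longrightarrow> chain_value d w xs \<le> gromov_product d w (xs ! i) (xs ! Suc i)"
  using le_chain_value_iff[of xs "chain_value d w xs" d w] successively_nth by fastforce

locale pointed_metric_space = Metric_space X d for X :: "'a set" and d +
  fixes x0 :: 'a
  assumes basepoint: "x0 \<in> X"
begin

abbreviation gp :: "'a \<Rightarrow> 'a \<Rightarrow> real" where "gp \<equiv> gromov_product d x0"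

lemma chain_value_rev: "chain_value d x0 (rev xs) = chain_value d x0 xs"
proof (cases "2 \<le> length xs")
  case True
  have "successively (\<lambda>u v. m \<le> gp u v) (rev xs) \<longleftrightarrow> successively (\<lambda>u v. m \<le> gp u v) xs" for m
    by (rule successively_rev_sym) (simp add: gromov_product_commute)
  then have "m \<le> chain_value d x0 (rev xs) \<longleftrightarrow> m \<le> chain_value d x0 xs" for m
    using True le_chain_value_iff[of "rev xs"] le_chain_value_iff[of xs] by simp
  then show ?thesis by (meson order_antisym order_refl)
next
  case False
  then have "length xs - 1 = 0" by simp
  then show ?thesis unfolding chain_value_def by simp
qed

lemma chain_values_commute: "chain_values X d x0 x y = chain_values X d x0 y x"
proof -
  have "v \<in> chain_values X d x0 y x" if v: "v \<in> chain_values X d x0 x y" for v x y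
  proof -
    obtain xs where "v = chain_value d x0 xs" "2 \<le> length xs" "hd xs = x" "last xs = y" "set xs \<subseteq> X"
      using v unfolding chain_values_def by blast
    then have "v = chain_value d x0 (rev xs)" "2 \<le> length (rev xs)" "hd (rev xs) = y"
      "last (rev xs) = x" "set (rev xs) \<subseteq> X"
      by (simp_all add: chain_value_rev hd_rev last_rev)
    then show ?thesis unfolding chain_values_def by blast
  qed
  then show ?thesis by blast
qed

lemma gromov_product_in_chain_values: "x \<in> X \<Longrightarrow> y \<in> X \<Longrightarrow> gp x y \<in> chain_values X d x0 x y"
  unfolding chain_values_def chain_value_def
  by (intro CollectI exI[of _ "[x, y]"]) (auto simp: lessThan_Suc)

lemma chain_values_le_dist: "v \<in> chain_values X d x0 x y \<Longrightarrow> v \<le> d x0 x"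
proof -
  assume "v \<in> chain_values X d x0 x y"
  then obtain xs where xs: "v = chain_value d x0 xs" "2 \<le> length xs" "hd xs = x" "set xs \<subseteq> X"
    unfolding chain_values_def by blast
  have "xs \<noteq> []" using xs(2) by auto
  then have x: "xs ! 0 = x" using xs(3) by (simp add: hd_conv_nth)
  have "xs ! 0 \<in> set xs" "xs ! 1 \<in> set xs" using xs(2) by (auto intro!: nth_mem)
  then have "xs ! 0 \<in> X" "xs ! 1 \<in> X" using xs(4) by auto
  then have "gp (xs ! 0) (xs ! 1) \<le> d x0 x" using gromov_product_le_dist[OF basepoint] x by simp
  moreover have "v \<le> gp (xs ! 0) (xs ! 1)" using chain_value_le_link[of xs 0] xs by simp
  ultimately show ?thesis by simp
qed

lemma chain_values_bdd_above: "bdd_above (chain_values X d x0 x y)"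
  using chain_values_le_dist by (meson bdd_aboveI)

lemma gromov_product_le_chain_product:
  "x \<in> X \<Longrightarrow> y \<in> X \<Longrightarrow> gp x y \<le> chain_product X d x0 x y"
  unfolding chain_product_eq_Sup
  by (rule cSup_upper[OF gromov_product_in_chain_values chain_values_bdd_above])

lemma chain_product_le_dist: "x \<in> X \<Longrightarrow> y \<in> X \<Longrightarrow> chain_product X d x0 x y \<le> d x0 x"
  unfolding chain_product_eq_Sup using gromov_product_in_chain_values
  by (intro cSup_least) (auto intro: chain_values_le_dist)

lemma chain_product_commute: "chain_product X d x0 x y = chain_product X d x0 y x"
  unfolding chain_product_eq_Sup using chain_values_commute[of x y] by simp

lemma chain_values_concat:
  assumes "v1 \<in> chain_values X d x0 a b" "v2 \<in> chain_values X d x0 b c"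
  shows "\<exists>v\<in>chain_values X d x0 a c. min v1 v2 \<le> v"
proof -
  obtain xs where xs: "v1 = chain_value d x0 xs" "2 \<le> length xs" "hd xs = a" "last xs = b" "set xs \<subseteq> X"
    using assms(1) unfolding chain_values_def by blast
  obtain ys where ys: "v2 = chain_value d x0 ys" "2 \<le> length ys" "hd ys = b" "last ys = c" "set ys \<subseteq> X"
    using assms(2) unfolding chain_values_def by blast
  let ?m = "min v1 v2" and ?zs = "xs @ tl ys"
  have "successively (\<lambda>u v. v1 \<le> gp u v) xs" "successively (\<lambda>u v. v2 \<le> gp u v) ys"
    using le_chain_value_iff[of xs v1 d x0] le_chain_value_iff[of ys v2 d x0] xs ys by simp_all
  then have "successively (\<lambda>u v. ?m \<le> gp u v) xs" "successively (\<lambda>u v. ?m \<le> gp u v) ys"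
    by (auto elim!: successively_mono)
  then have "successively (\<lambda>u v. ?m \<le> gp u v) ?zs"
    using xs ys by (intro successively_append_tl) auto
  moreover have "xs \<noteq> []" "tl ys \<noteq> []" using xs(2) ys(2) by (auto simp: tl_Nil)
  then have "2 \<le> length ?zs" "hd ?zs = a" "last ?zs = c"
    using xs(2,3) ys(4) by (simp_all add: last_tl)
  moreover have "set (tl ys) \<subseteq> set ys" by (cases ys) auto
  then have "set ?zs \<subseteq> X" using xs(5) ys(5) by auto
  ultimately show ?thesis
    unfolding chain_values_def using le_chain_value_iff[of ?zs ?m d x0] by blast
qed

lemma chain_product_ultrametric:
  assumes "a \<in> X" "b \<in> X" "c \<in> X"
  shows "min (chain_product X d x0 a b) (chain_product X d x0 b c) \<le> chain_product X d x0 a c"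
proof (rule ccontr)
  assume "\<not> ?thesis"
  then have "chain_product X d x0 a c < Sup (chain_values X d x0 a b)"
    "chain_product X d x0 a c < Sup (chain_values X d x0 b c)"
    unfolding chain_product_eq_Sup[of X d x0 a b] chain_product_eq_Sup[of X d x0 b c] by auto
  moreover have "chain_values X d x0 a b \<noteq> {}" "chain_values X d x0 b c \<noteq> {}"
    using gromov_product_in_chain_values assms by blast+
  ultimately obtain v1 v2 where v: "v1 \<in> chain_values X d x0 a b" "v2 \<in> chain_values X d x0 b c"
    "chain_product X d x0 a c < v1" "chain_product X d x0 a c < v2"
    using less_cSup_iff[OF _ chain_values_bdd_above] by meson
  obtain v where "v \<in> chain_values X d x0 a c" "min v1 v2 \<le> v"
    using chain_values_concat[OF v(1,2)] by blast
  moreover have "v \<le> chain_product X d x0 a c"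
    unfolding chain_product_eq_Sup using \<open>v \<in> _\<close> by (rule cSup_upper[OF _ chain_values_bdd_above])
  ultimately show False using v by linarith
qed

lemma chain_product_basepoint: "x \<in> X \<Longrightarrow> chain_product X d x0 x0 x = 0"
  using chain_product_le_dist[of x0 x] gromov_product_le_chain_product[of x0 x]
    gromov_product_basepoint basepoint by simp

lemma chain_product_self: "x \<in> X \<Longrightarrow> chain_product X d x0 x x = d x0 x"
  using chain_product_le_dist[of x x] gromov_product_le_chain_product[of x x]
    gromov_product_self basepoint by simp

abbreviation ead :: "'a \<Rightarrow> 'a \<Rightarrow> real" where "ead \<equiv> ea_dist X d x0"

lemma ea_dist_commute: "ead x y = ead y x"
  unfolding ea_dist_def using chain_product_commute by simp

lemma ea_dist_triangle: "x \<in> X \<Longrightarrow> y \<in> X \<Longrightarrow> z \<in> X \<Longrightarrow> ead x z \<le> ead x y + ead y z"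
  unfolding ea_dist_def
  using chain_product_ultrametric[of x y z] chain_product_le_dist[of y x] chain_product_le_dist[of y z]
    chain_product_commute[of x y]
  by linarith

lemma ea_dist_self: "x \<in> X \<Longrightarrow> ead x x = 0"
  unfolding ea_dist_def using chain_product_self by simp

lemma ea_dist_basepoint: "x \<in> X \<Longrightarrow> ead x0 x = d x0 x"
  unfolding ea_dist_def using chain_product_basepoint basepoint by simp

abbreviation ea_cls :: "'a \<Rightarrow> 'a set" where "ea_cls \<equiv> ea_class X d x0"

lemma ea_class_self: "x \<in> X \<Longrightarrow> x \<in> ea_cls x"
  unfolding ea_class_def using ea_dist_self by simp

lemma ea_dist_class_member:
  assumes x: "x \<in> X" and x': "x' \<in> ea_cls x" and y: "y \<in> X"
  shows "ead x' y = ead x y"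
proof -
  have "x' \<in> X" "ead x x' = 0" using x' unfolding ea_class_def by auto
  then show ?thesis
    using ea_dist_triangle[OF \<open>x' \<in> X\<close> x y] ea_dist_triangle[OF x \<open>x' \<in> X\<close> y]
      ea_dist_commute[of x x'] by linarith
qed

lemma ea_metric_classes:
  assumes x: "x \<in> X" and y: "y \<in> X"
  shows "ea_metric X d x0 (ea_cls x) (ea_cls y) = ead x y"
proof -
  define x' y' where "x' = (SOME z. z \<in> ea_cls x)" and "y' = (SOME z. z \<in> ea_cls y)"
  have x': "x' \<in> ea_cls x" and y': "y' \<in> ea_cls y"
    unfolding x'_def y'_def using ea_class_self[OF x] ea_class_self[OF y] by (metis someI)+
  then have "y' \<in> X" unfolding ea_class_def by simp
  have "ead x' y' = ead x y'" by (rule ea_dist_class_member[OF x x' \<open>y' \<in> X\<close>])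
  also have "\<dots> = ead y' x" by (rule ea_dist_commute)
  also have "\<dots> = ead y x" by (rule ea_dist_class_member[OF y y' x])
  also have "\<dots> = ead x y" by (rule ea_dist_commute)
  finally show ?thesis unfolding ea_metric_def x'_def y'_def .
qed

lemma ea_metric_commute: "ea_metric X d x0 P Q = ea_metric X d x0 Q P"
  unfolding ea_metric_def using ea_dist_commute by simp

lemma ea_tree_gromov_product:
  "x \<in> X \<Longrightarrow> y \<in> X \<Longrightarrow>
   gromov_product (ea_metric X d x0) (ea_cls x0) (ea_cls x) (ea_cls y) = chain_product X d x0 x y"
  unfolding gromov_product_def using ea_metric_classes basepoint ea_dist_basepoint
  unfolding ea_dist_def by simp

end

section \<open>Quasi-trees\<close>

definition geodesic_segment :: "'a set \<Rightarrow> ('a \<Rightarrow> 'a \<Rightarrow> real) \<Rightarrow> (real \<Rightarrow> 'a) \<Rightarrow> 'a \<Rightarrow> 'a \<Rightarrow> bool" where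
  "geodesic_segment X d \<gamma> a b \<longleftrightarrow> \<gamma> 0 = a \<and> \<gamma> (d a b) = b \<and> (\<forall>t\<in>{0..d a b}. \<gamma> t \<in> X) \<and>
     (\<forall>s\<in>{0..d a b}. \<forall>t\<in>{0..d a b}. d (\<gamma> s) (\<gamma> t) = \<bar>s - t\<bar>)"

definition some_geodesic :: "'a set \<Rightarrow> ('a \<Rightarrow> 'a \<Rightarrow> real) \<Rightarrow> 'a \<Rightarrow> 'a \<Rightarrow> real \<Rightarrow> 'a" where
  "some_geodesic X d a b = (SOME \<gamma>. geodesic_segment X d \<gamma> a b)"

lemma some_geodesic:
  assumes "geodesic_space X d" "a \<in> X" "b \<in> X"
  shows "geodesic_segment X d (some_geodesic X d a b) a b"
proof -
  have "\<exists>\<gamma>. geodesic_segment X d \<gamma> a b"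
    using assms unfolding geodesic_space_def geodesic_segment_def by blast
  then show ?thesis unfolding some_geodesic_def by (rule someI_ex)
qed

lemma geodesic_segment_dist:
  assumes "geodesic_segment X d \<gamma> a b" "s \<in> {0..d a b}"
  shows "d a (\<gamma> s) = s" "d (\<gamma> s) b = d a b - s"
proof -
  have ends: "0 \<in> {0..d a b}" "d a b \<in> {0..d a b}" using assms(2) by auto
  show "d a (\<gamma> s) = s" "d (\<gamma> s) b = d a b - s"
    using assms ends unfolding geodesic_segment_def by (metis abs_of_nonneg abs_minus_commute
        atLeastAtMost_iff diff_ge_0_iff_ge diff_zero)+
qed

lemma unit_steps_between:
  fixes a b :: real
  obtains K :: nat and s :: "nat \<Rightarrow> real"
  where "s 0 = a" "s K = b" "\<And>k. min a b \<le> s k \<and> s k \<le> max a b" "\<And>k. \<bar>s k - s (Suc k)\<bar> \<le> 1"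
proof -
  obtain K :: nat where K: "\<bar>b - a\<bar> \<le> real K" using real_arch_simple by blast
  let ?s = "\<lambda>k::nat. if a \<le> b then min (a + real k) b else max (a - real k) b"
  show thesis
  proof (rule that[of ?s K])
    show "?s 0 = a" "?s K = b" using K by auto
    show "min a b \<le> ?s k \<and> ?s k \<le> max a b" "\<bar>?s k - ?s (Suc k)\<bar> \<le> 1" for k
      by auto
  qed
qed

locale quasi_tree_map =
  fixes X :: "'a set" and d :: "'a \<Rightarrow> 'a \<Rightarrow> real" and V :: "'b set" and E :: "'b \<Rightarrow> 'b \<Rightarrow> bool"
    and f :: "'a \<Rightarrow> 'b" and lam C :: real
  assumes metric: "Metric_space X d" and geodesic: "geodesic_space X d"
    and tree: "simplicial_tree V E" and maps_to: "f ` X \<subseteq> V" and lam: "1 \<le> lam" and C: "0 \<le> C"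
    and quasi_isometry: "\<And>x y. x \<in> X \<Longrightarrow> y \<in> X \<Longrightarrow>
      d x y / lam - C \<le> graph_dist E (f x) (f y) \<and> graph_dist E (f x) (f y) \<le> lam * d x y + C"
begin

sublocale X: Metric_space X d by (rule metric)

sublocale T: Metric_space V "graph_dist E" by (rule graph_dist_metric[OF tree])

abbreviation tdist :: "'a \<Rightarrow> 'a \<Rightarrow> real" where
  "tdist x y \<equiv> graph_dist E (f x) (f y)"

abbreviation tprod :: "'a \<Rightarrow> 'a \<Rightarrow> 'a \<Rightarrow> real" where
  "tprod p x y \<equiv> gromov_product (graph_dist E) (f p) (f x) (f y)"

lemma image_in_tree: "x \<in> X \<Longrightarrow> f x \<in> V"
  using maps_to by blast

lemma tprod_ultrametric:
  "p \<in> X \<Longrightarrow> x \<in> X \<Longrightarrow> y \<in> X \<Longrightarrow> z \<in> X \<Longrightarrow> min (tprod p x y) (tprod p y z) \<le> tprod p x z"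
  by (rule tree_gromov_product_ultrametric[OF tree]) (simp_all add: image_in_tree)

lemma dist_le_tdist: "x \<in> X \<Longrightarrow> y \<in> X \<Longrightarrow> d x y \<le> lam * (tdist x y + C)"
  using quasi_isometry[of x y] lam by (simp add: field_simps)

lemma tdist_le_dist: "x \<in> X \<Longrightarrow> y \<in> X \<Longrightarrow> tdist x y \<le> lam * d x y + C"
  using quasi_isometry by blast

definition step_bound :: real where
  "step_bound = lam + C"

definition product_bound :: real where
  "product_bound = lam\<^sup>2 * (2 * step_bound + C) / 2 + step_bound + C"

definition far_radius :: real where
  "far_radius = lam * (product_bound + C + step_bound + 1)"

lemma step_bound_nonneg: "0 \<le> step_bound"
  unfolding step_bound_def using lam C by simp

lemma far_radius_nonneg: "0 \<le> far_radius"
  unfolding far_radius_def product_bound_def using lam C step_bound_nonneg by simp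

lemma tdist_geodesic_step:
  assumes "geodesic_segment X d \<gamma> a b" "s \<in> {0..d a b}" "t \<in> {0..d a b}" "\<bar>s - t\<bar> \<le> 1"
  shows "tdist (\<gamma> s) (\<gamma> t) \<le> step_bound"
proof -
  have "\<gamma> s \<in> X" "\<gamma> t \<in> X" "d (\<gamma> s) (\<gamma> t) = \<bar>s - t\<bar>"
    using assms(1-3) unfolding geodesic_segment_def by auto
  then have "tdist (\<gamma> s) (\<gamma> t) \<le> lam * \<bar>s - t\<bar> + C" using tdist_le_dist by metis
  also have "\<dots> \<le> lam + C" using assms(4) lam by (simp add: mult_left_le)
  finally show ?thesis unfolding step_bound_def .
qed

lemma coarse_path_branch_point:
  assumes p: "p \<in> X" and z: "\<And>k. k \<le> K \<Longrightarrow> z k \<in> X" and z0: "z 0 = p"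
    and steps: "\<And>k. k < K \<Longrightarrow> tdist (z k) (z (Suc k)) \<le> step_bound"
    and R: "0 \<le> R" "R \<le> tdist p (z K)"
  shows "\<exists>k\<le>K. tdist p (z k) \<le> R \<and> R - step_bound \<le> tprod p (z k) (z K)"
proof -
  let ?P = "\<lambda>k. k \<le> K \<and> R - step_bound \<le> tprod p (z k) (z K)"
  define k where "k = (LEAST k. ?P k)"
  have "?P K"
    using T.gromov_product_self[OF image_in_tree[OF p] image_in_tree[OF z]] R step_bound_nonneg by simp
  then have Pk: "?P k" unfolding k_def by (rule LeastI)
  have "tdist p (z k) \<le> R"
  proof (cases k)
    case 0
    then show ?thesis using z0 R by (simp add: graph_dist_refl)
  next
    case (Suc j)
    then have "\<not> ?P j" using not_less_Least[of j ?P] unfolding k_def by simp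
    then have small: "tprod p (z j) (z K) < R - step_bound" using Pk Suc by auto
    have in_X: "z j \<in> X" "z k \<in> X" "z K \<in> X" using z Pk Suc by auto
    have "min (tprod p (z j) (z k)) (tprod p (z k) (z K)) \<le> tprod p (z j) (z K)"
      using tprod_ultrametric p in_X by blast
    then have "tprod p (z j) (z k) < R - step_bound" using small Pk by linarith
    moreover have "tdist p (z k) - tdist (z j) (z k) \<le> tprod p (z j) (z k)"
      using T.gromov_product_ge_dist_diff image_in_tree p in_X by blast
    moreover have "tdist (z j) (z k) \<le> step_bound" using steps[of j] Suc Pk by simp
    ultimately show ?thesis by linarith
  qed
  then show ?thesis using Pk by blast
qed

lemma geodesic_branch_point:
  assumes \<gamma>: "geodesic_segment X d \<gamma> a b" and t: "t \<in> {0..d a b}" and t': "t' \<in> {0..d a b}"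
    and R: "0 \<le> R" "R \<le> tdist (\<gamma> t) (\<gamma> t')"
  obtains s where "min t t' \<le> s" "s \<le> max t t'" "tdist (\<gamma> t) (\<gamma> s) \<le> R"
    "R - step_bound \<le> tprod (\<gamma> t) (\<gamma> s) (\<gamma> t')"
proof -
  obtain K \<sigma> where \<sigma>: "\<sigma> 0 = t" "\<sigma> K = t'" "\<And>k. min t t' \<le> \<sigma> k \<and> \<sigma> k \<le> max t t'"
    "\<And>k. \<bar>\<sigma> k - \<sigma> (Suc k)\<bar> \<le> 1"
    by (rule unit_steps_between[of t t']) blast
  have range: "\<sigma> k \<in> {0..d a b}" for k using \<sigma>(3)[of k] t t' by auto
  have in_X: "\<gamma> (\<sigma> k) \<in> X" for k using \<gamma> range unfolding geodesic_segment_def by blast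
  obtain k where "tdist (\<gamma> t) (\<gamma> (\<sigma> k)) \<le> R" "R - step_bound \<le> tprod (\<gamma> t) (\<gamma> (\<sigma> k)) (\<gamma> t')"
    using coarse_path_branch_point[of "\<gamma> t" K "\<lambda>k. \<gamma> (\<sigma> k)" R] in_X[of 0] in_X \<sigma>(1,2) R
      tdist_geodesic_step[OF \<gamma> range range \<sigma>(4)] by auto
  then show thesis using that \<sigma>(3) by blast
qed

lemma geodesic_branch_points:
  assumes x: "x \<in> X" and y: "y \<in> X" and \<gamma>: "geodesic_segment X d \<gamma> x y" and t: "t \<in> {0..d x y}"
  defines "D \<equiv> tprod (\<gamma> t) x y"
  obtains sa sb where "0 \<le> sa" "sa \<le> t" "t \<le> sb" "sb \<le> d x y"
    "tdist (\<gamma> t) (\<gamma> sa) \<le> D" "D - step_bound \<le> tprod (\<gamma> t) (\<gamma> sa) x"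
    "tdist (\<gamma> t) (\<gamma> sb) \<le> D" "D - step_bound \<le> tprod (\<gamma> t) (\<gamma> sb) y"
proof -
  have ends: "0 \<in> {0..d x y}" "d x y \<in> {0..d x y}" "\<gamma> 0 = x" "\<gamma> (d x y) = y"
    using \<gamma> t unfolding geodesic_segment_def by auto
  have p: "\<gamma> t \<in> X" using \<gamma> t unfolding geodesic_segment_def by blast
  have D: "0 \<le> D" "D \<le> tdist (\<gamma> t) x" "D \<le> tdist (\<gamma> t) y"
    using T.gromov_product_nonneg T.gromov_product_le_dist T.gromov_product_commute image_in_tree p x y
    unfolding D_def by metis+
  obtain sa where "0 \<le> sa" "sa \<le> t" "tdist (\<gamma> t) (\<gamma> sa) \<le> D" "D - step_bound \<le> tprod (\<gamma> t) (\<gamma> sa) x"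
    using geodesic_branch_point[OF \<gamma> t ends(1), of D] D ends(3) t by auto
  moreover obtain sb where "t \<le> sb" "sb \<le> d x y" "tdist (\<gamma> t) (\<gamma> sb) \<le> D"
    "D - step_bound \<le> tprod (\<gamma> t) (\<gamma> sb) y"
    using geodesic_branch_point[OF \<gamma> t ends(2), of D] D ends(4) t by auto
  ultimately show thesis using that by blast
qed

text \<open>The image of a geodesic passes close to the image of each of its points: the branch points
  on either side of \<open>\<gamma> t\<close> have nearby images, hence are close in \<open>X\<close>, which bounds how far the
  tree geodesic from \<open>f x\<close> to \<open>f y\<close> can stray from \<open>f (\<gamma> t)\<close>.\<close>

lemma tprod_geodesic_le:
  assumes x: "x \<in> X" and y: "y \<in> X" and \<gamma>: "geodesic_segment X d \<gamma> x y" and t: "t \<in> {0..d x y}"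
  shows "tprod (\<gamma> t) x y \<le> product_bound"
proof -
  define p D where "p = \<gamma> t" and "D = tprod p x y"
  obtain sa sb where sa: "0 \<le> sa" "sa \<le> t" "tdist p (\<gamma> sa) \<le> D" "D - step_bound \<le> tprod p (\<gamma> sa) x"
    and sb: "t \<le> sb" "sb \<le> d x y" "tdist p (\<gamma> sb) \<le> D" "D - step_bound \<le> tprod p (\<gamma> sb) y"
    using geodesic_branch_points[OF x y \<gamma> t] unfolding p_def D_def by metis
  have in_X: "s \<in> {0..d x y} \<Longrightarrow> \<gamma> s \<in> X" for s using \<gamma> unfolding geodesic_segment_def by blast
  have dist: "s \<in> {0..d x y} \<Longrightarrow> d p (\<gamma> s) = \<bar>t - s\<bar>" for s
    using \<gamma> t unfolding geodesic_segment_def p_def by blast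
  have p: "p \<in> X" using in_X t unfolding p_def by blast
  have sa_range: "sa \<in> {0..d x y}" and sb_range: "sb \<in> {0..d x y}" using sa sb t by auto
  have a: "\<gamma> sa \<in> X" and b: "\<gamma> sb \<in> X" using in_X sa_range sb_range by blast+
  have "min (tprod p (\<gamma> sa) x) (tprod p x y) \<le> tprod p (\<gamma> sa) y"
    by (rule tprod_ultrametric[OF p a x y])
  then have "D - step_bound \<le> tprod p (\<gamma> sa) y" using sa(4) step_bound_nonneg unfolding D_def by linarith
  moreover have "min (tprod p (\<gamma> sa) y) (tprod p y (\<gamma> sb)) \<le> tprod p (\<gamma> sa) (\<gamma> sb)"
    by (rule tprod_ultrametric[OF p a y b])
  moreover have "tprod p y (\<gamma> sb) = tprod p (\<gamma> sb) y" by (rule T.gromov_product_commute)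
  ultimately have "D - step_bound \<le> tprod p (\<gamma> sa) (\<gamma> sb)" using sb(4) by linarith
  then have "tdist (\<gamma> sa) (\<gamma> sb) \<le> 2 * step_bound"
    using sa(3) sb(3) unfolding gromov_product_def by argo
  then have close: "tdist (\<gamma> sa) (\<gamma> sb) \<le> 2 * step_bound" .
  have "sb - sa = d (\<gamma> sa) (\<gamma> sb)" using \<gamma> sa_range sb_range sa sb unfolding geodesic_segment_def by auto
  also have "\<dots> \<le> lam * (tdist (\<gamma> sa) (\<gamma> sb) + C)" by (rule dist_le_tdist[OF a b])
  also have "\<dots> \<le> lam * (2 * step_bound + C)" using close lam by (intro mult_left_mono) auto
  finally have width: "sb - sa \<le> lam * (2 * step_bound + C)" .
  have "D - step_bound \<le> tdist p (\<gamma> sa)"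
    using sa(4) T.gromov_product_le_dist[OF image_in_tree[OF p] image_in_tree[OF a] image_in_tree[OF x]]
    by linarith
  also have "\<dots> \<le> lam * (t - sa) + C" using tdist_le_dist[OF p a] dist[OF sa_range] sa by simp
  finally have left: "D - step_bound - C \<le> lam * (t - sa)" by simp
  have "D - step_bound \<le> tdist p (\<gamma> sb)"
    using sb(4) T.gromov_product_le_dist[OF image_in_tree[OF p] image_in_tree[OF b] image_in_tree[OF y]]
    by linarith
  also have "\<dots> \<le> lam * (sb - t) + C" using tdist_le_dist[OF p b] dist[OF sb_range] sb by simp
  finally have right: "D - step_bound - C \<le> lam * (sb - t)" by simp
  have "2 * (D - step_bound - C) \<le> lam * (sb - sa)"
    using left right by (simp add: algebra_simps)
  also have "\<dots> \<le> lam * (lam * (2 * step_bound + C))" using width lam by (intro mult_left_mono) auto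
  finally show ?thesis unfolding product_bound_def D_def p_def by (simp add: power2_eq_square)
qed

lemma tdist_far: "p \<in> X \<Longrightarrow> z \<in> X \<Longrightarrow> far_radius < d p z \<Longrightarrow> product_bound + 1 + step_bound < tdist p z"
  using dist_le_tdist[of p z] lam unfolding far_radius_def by (smt (verit) mult_le_cancel_left_pos)

lemma tprod_geodesic_avoiding:
  assumes a: "a \<in> X" and b: "b \<in> X" and p: "p \<in> X" and \<gamma>: "geodesic_segment X d \<gamma> a b"
    and far: "\<And>s. s \<in> {0..d a b} \<Longrightarrow> far_radius < d p (\<gamma> s)"
  shows "product_bound + 1 \<le> tprod p a b"
proof -
  obtain K \<sigma> where \<sigma>: "\<sigma> 0 = 0" "\<sigma> K = d a b" "\<And>k. min 0 (d a b) \<le> \<sigma> k \<and> \<sigma> k \<le> max 0 (d a b)"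
    "\<And>k. \<bar>\<sigma> k - \<sigma> (Suc k)\<bar> \<le> 1"
    by (rule unit_steps_between[of 0 "d a b"]) blast
  have range: "\<sigma> k \<in> {0..d a b}" for k using \<sigma>(3)[of k] X.nonneg[of a b] by auto
  define z where "z k = \<gamma> (\<sigma> k)" for k
  have z: "z k \<in> X" for k using \<gamma> range unfolding z_def geodesic_segment_def by blast
  have z_far: "product_bound + 1 + step_bound < tdist p (z k)" for k
    using tdist_far[OF p z] far range unfolding z_def by blast
  have ends: "z 0 = a" "z K = b" using \<gamma> \<sigma>(1,2) unfolding z_def geodesic_segment_def by auto
  have "product_bound + 1 \<le> tprod p (z 0) (z K)"
  proof (rule ultrametric_chain[where A = X])
    show "product_bound + 1 \<le> tprod p (z 0) (z 0)"
      using z_far[of 0] step_bound_nonneg T.gromov_product_self image_in_tree p z by simp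
  next
    fix k
    have "tdist p (z (Suc k)) - tdist (z k) (z (Suc k)) \<le> tprod p (z k) (z (Suc k))"
      using T.gromov_product_ge_dist_diff image_in_tree p z by blast
    moreover have "tdist (z k) (z (Suc k)) \<le> step_bound"
      unfolding z_def by (rule tdist_geodesic_step[OF \<gamma> range range \<sigma>(4)])
    ultimately show "product_bound + 1 \<le> tprod p (z k) (z (Suc k))" using z_far[of "Suc k"] by linarith
  qed (use tprod_ultrametric p z in auto)
  then show ?thesis unfolding ends .
qed

definition geodesic_avoids :: "'a \<Rightarrow> 'a \<Rightarrow> 'a \<Rightarrow> bool" where
  "geodesic_avoids p u v \<longleftrightarrow> (\<forall>s\<in>{0..d u v}. far_radius < d p (some_geodesic X d u v s))"

lemma tprod_chain_avoiding:
  assumes p: "p \<in> X" and xs: "set xs \<subseteq> X" "2 \<le> length xs"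
    and avoids: "successively (geodesic_avoids p) xs"
  shows "product_bound + 1 \<le> tprod p (hd xs) (last xs)"
proof -
  define K where "K = length xs - 1"
  have z: "k \<le> K \<Longrightarrow> xs ! k \<in> X" for k using xs nth_mem unfolding K_def by fastforce
  have geo: "Suc k \<le> K \<Longrightarrow> geodesic_segment X d (some_geodesic X d (xs ! k) (xs ! Suc k)) (xs ! k) (xs ! Suc k)"
    for k using some_geodesic[OF geodesic] z by simp
  have link: "Suc k \<le> K \<Longrightarrow> geodesic_avoids p (xs ! k) (xs ! Suc k)" for k
    using avoids successively_nth unfolding K_def by fastforce
  have "product_bound + 1 \<le> tprod p (xs ! 0) (xs ! K)"
  proof (rule ultrametric_chain[where A = X])
    have "0 < K" using xs unfolding K_def by simp
    then have "far_radius < d p (xs ! 0)"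
      using link[of 0] geo[of 0] X.nonneg unfolding geodesic_avoids_def geodesic_segment_def by force
    then show "product_bound + 1 \<le> tprod p (xs ! 0) (xs ! 0)"
      using tdist_far[OF p z] step_bound_nonneg T.gromov_product_self image_in_tree p z by force
  next
    fix k assume "k < K"
    then show "product_bound + 1 \<le> tprod p (xs ! k) (xs ! Suc k)"
      using tprod_geodesic_avoiding[OF z z p geo] link unfolding geodesic_avoids_def by simp
  qed (use tprod_ultrametric p z in auto)
  moreover have "xs \<noteq> []" using xs(2) by auto
  then have "xs ! 0 = hd xs" "xs ! K = last xs" unfolding K_def by (simp_all add: hd_conv_nth last_conv_nth)
  ultimately show ?thesis by simp
qed

text \<open>The point \<open>p\<close> of \<open>[x,y]\<close> at distance \<open>(y,x0)\<^sub>x\<close> from \<open>x\<close> is the one to look at: by the Morse bound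
  the chain \<open>x, x0, y\<close> cannot avoid it, and a side geodesic passing near \<open>p\<close> pins down \<open>d x0 p\<close>.\<close>

lemma geodesic_near_basepoint:
  assumes x0: "x0 \<in> X" and x: "x \<in> X" and y: "y \<in> X" and \<gamma>: "geodesic_segment X d \<gamma> x y"
  shows "\<exists>t\<in>{0..d x y}. d x0 (\<gamma> t) \<le> gromov_product d x0 x y + 2 * far_radius"
proof -
  define t where "t = (d x y + d x x0 - d y x0) / 2"
  have t: "t \<in> {0..d x y}"
    using X.triangle[OF y x x0] X.triangle[OF x y x0] X.commute[of y x] unfolding t_def by auto
  define p where "p = \<gamma> t"
  have p: "p \<in> X" using \<gamma> t unfolding p_def geodesic_segment_def by blast
  have dist_p: "d x p = t" "d p y = d x y - t" using geodesic_segment_dist[OF \<gamma> t] unfolding p_def by simp_all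
  have "tprod p x y \<le> product_bound" unfolding p_def by (rule tprod_geodesic_le[OF x y \<gamma> t])
  then have "\<not> successively (geodesic_avoids p) [x, x0, y]"
    using tprod_chain_avoiding[OF p, of "[x, x0, y]"] x x0 y by auto
  then consider (left) s where "s \<in> {0..d x x0}" "d p (some_geodesic X d x x0 s) \<le> far_radius"
    | (right) s where "s \<in> {0..d x0 y}" "d p (some_geodesic X d x0 y s) \<le> far_radius"
    unfolding geodesic_avoids_def by (auto simp: not_less)
  then have "d x0 p \<le> gromov_product d x0 x y + 2 * far_radius"
  proof cases
    case left
    let ?q = "some_geodesic X d x x0 s"
    have geo: "geodesic_segment X d (some_geodesic X d x x0) x x0" by (rule some_geodesic[OF geodesic x x0])
    then have "?q \<in> X" "d x ?q + d ?q x0 = d x x0"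
      using geodesic_segment_dist[OF geo left(1)] left(1) unfolding geodesic_segment_def by auto
    then show ?thesis
      using X.dist_le_gromov_product_near_side[OF x0 x p \<open>?q \<in> X\<close>] dist_p left(2) unfolding t_def by simp
  next
    case right
    let ?q = "some_geodesic X d x0 y s"
    have geo: "geodesic_segment X d (some_geodesic X d x0 y) x0 y" by (rule some_geodesic[OF geodesic x0 y])
    then have "?q \<in> X" "d y ?q + d ?q x0 = d y x0"
      using geodesic_segment_dist[OF geo right(1)] right(1) X.commute unfolding geodesic_segment_def by auto
    moreover have "d y p = (d y x + d y x0 - d x x0) / 2"
      using dist_p X.commute[of y p] X.commute[of y x] unfolding t_def by argo
    ultimately show ?thesis
      using X.dist_le_gromov_product_near_side[OF x0 y p \<open>?q \<in> X\<close>] right(2) X.gromov_product_commute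
      by simp
  qed
  then show ?thesis using t X.commute unfolding p_def by auto
qed

text \<open>If all links had larger Gromov products, all link geodesics would avoid the point of \<open>[x,y]\<close>
  near \<open>x0\<close> given by the previous lemma, contradicting the Morse bound.\<close>

lemma chain_link_gromov_product_le:
  assumes x0: "x0 \<in> X" and xs: "2 \<le> length xs" "set xs \<subseteq> X"
  shows "\<exists>i. Suc i < length xs \<and>
    gromov_product d x0 (xs ! i) (xs ! Suc i) \<le> gromov_product d x0 (hd xs) (last xs) + 3 * far_radius"
proof (rule ccontr)
  let ?M = "gromov_product d x0 (hd xs) (last xs) + 3 * far_radius"
  assume "\<not> ?thesis"
  then have big: "successively (\<lambda>u v. ?M < gromov_product d x0 u v) xs"
    unfolding successively_conv_nth by (auto simp: not_le)
  have "xs \<noteq> []" using xs(1) by auto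
  then have x: "hd xs \<in> X" and y: "last xs \<in> X" using xs(2) by auto
  let ?\<gamma> = "some_geodesic X d (hd xs) (last xs)"
  have \<gamma>: "geodesic_segment X d ?\<gamma> (hd xs) (last xs)" by (rule some_geodesic[OF geodesic x y])
  obtain t where t: "t \<in> {0..d (hd xs) (last xs)}"
    "d x0 (?\<gamma> t) \<le> gromov_product d x0 (hd xs) (last xs) + 2 * far_radius"
    using geodesic_near_basepoint[OF x0 x y \<gamma>] by blast
  define p where "p = ?\<gamma> t"
  have p: "p \<in> X" using \<gamma> t(1) unfolding p_def geodesic_segment_def by blast
  have "successively (geodesic_avoids p) xs"
  proof (rule successively_mono[OF big])
    fix u v assume u: "u \<in> set xs" and v: "v \<in> set xs" and uv: "?M < gromov_product d x0 u v"
    show "geodesic_avoids p u v" unfolding geodesic_avoids_def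
    proof
      fix s assume s: "s \<in> {0..d u v}"
      let ?\<sigma> = "some_geodesic X d u v"
      have geo: "geodesic_segment X d ?\<sigma> u v" using some_geodesic[OF geodesic] u v xs(2) by blast
      then have q: "?\<sigma> s \<in> X" "d u (?\<sigma> s) + d (?\<sigma> s) v = d u v"
        using geodesic_segment_dist[OF geo s] s unfolding geodesic_segment_def by auto
      have "gromov_product d x0 u v \<le> d x0 (?\<sigma> s)"
        using X.gromov_product_le_dist_between[OF x0 _ _ q(1) q(2)] u v xs(2) by blast
      also have "\<dots> \<le> d x0 p + d p (?\<sigma> s)" by (rule X.triangle[OF x0 p q(1)])
      finally show "far_radius < d p (?\<sigma> s)" using uv t(2) unfolding p_def by linarith
    qed
  qed
  then have "product_bound + 1 \<le> tprod p (hd xs) (last xs)" using tprod_chain_avoiding p xs by blast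
  moreover have "tprod p (hd xs) (last xs) \<le> product_bound"
    unfolding p_def by (rule tprod_geodesic_le[OF x y \<gamma> t(1)])
  ultimately show False by simp
qed

lemma chain_product_le_gromov_product:
  assumes x0: "x0 \<in> X" and x: "x \<in> X" and y: "y \<in> X"
  shows "chain_product X d x0 x y \<le> gromov_product d x0 x y + 3 * far_radius"
  unfolding chain_product_eq_Sup
proof (rule cSup_least)
  interpret pointed_metric_space X d x0
    using metric x0 by (simp add: pointed_metric_space_def pointed_metric_space_axioms_def)
  show "chain_values X d x0 x y \<noteq> {}" using gromov_product_in_chain_values x y by blast
next
  fix v assume "v \<in> chain_values X d x0 x y"
  then obtain xs where xs: "v = chain_value d x0 xs" "2 \<le> length xs" "hd xs = x" "last xs = y" "set xs \<subseteq> X"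
    unfolding chain_values_def by blast
  obtain i where "Suc i < length xs"
    "gromov_product d x0 (xs ! i) (xs ! Suc i) \<le> gromov_product d x0 x y + 3 * far_radius"
    using chain_link_gromov_product_le[OF x0 xs(2,5)] xs(3,4) by blast
  then show "v \<le> gromov_product d x0 x y + 3 * far_radius"
    using chain_value_le_link[OF xs(2), of i d x0] xs(1) by linarith
qed

end

lemma quasi_tree_chain_product_bound:
  assumes "Metric_space X d" "geodesic_space X d" "simplicial_tree V E"
    and "quasi_isometric X d V (graph_dist E)" and "x0 \<in> X"
  obtains c where "0 \<le> c" "\<And>x y. x \<in> X \<Longrightarrow> y \<in> X \<Longrightarrow> chain_product X d x0 x y \<le> gromov_product d x0 x y + c"
proof -
  obtain f lam C where "quasi_tree_map X d V E f lam C"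
    using assms(1-4) unfolding quasi_isometric_def quasi_tree_map_def by blast
  then interpret quasi_tree_map X d V E f lam C .
  show thesis
    by (rule that[of "3 * far_radius"]) (simp_all add: far_radius_nonneg chain_product_le_gromov_product assms(5))
qed

section \<open>Sequential boundaries\<close>

definition pair_liminf :: "('a \<Rightarrow> 'a \<Rightarrow> real) \<Rightarrow> 'a \<Rightarrow> (nat \<Rightarrow> 'a) \<Rightarrow> (nat \<Rightarrow> 'a) \<Rightarrow> ereal" where
  "pair_liminf d w xs ys =
     Liminf (sequentially \<times>\<^sub>F sequentially) (\<lambda>(i, j). ereal (gromov_product d w (xs i) (ys j)))"

definition boundary_point :: "'a set \<Rightarrow> ('a \<Rightarrow> 'a \<Rightarrow> real) \<Rightarrow> 'a \<Rightarrow> (nat \<Rightarrow> 'a) \<Rightarrow> (nat \<Rightarrow> 'a) set" where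
  "boundary_point S d w xs = {ys. conv_infty S d w ys \<and> seq_equiv d w xs ys}"

lemma seq_boundary_eq: "seq_boundary S d w = {boundary_point S d w xs | xs. conv_infty S d w xs}"
  unfolding seq_boundary_def boundary_point_def ..

lemma boundary_product_eq:
  "boundary_product d w p q = Sup {pair_liminf d w xs ys | xs ys. xs \<in> p \<and> ys \<in> q}"
  unfolding boundary_product_def pair_liminf_def ..

lemma le_pair_liminf_iff:
  "c \<le> pair_liminf d w xs ys \<longleftrightarrow>
     (\<forall>y<c. \<exists>N. \<forall>i\<ge>N. \<forall>j\<ge>N. y < ereal (gromov_product d w (xs i) (ys j)))"
proof -
  have "eventually (\<lambda>x. y < (case x of (i, j) \<Rightarrow> ereal (gromov_product d w (xs i) (ys j))))
      (sequentially \<times>\<^sub>F sequentially) \<longleftrightarrow>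
    (\<exists>N. \<forall>i\<ge>N. \<forall>j\<ge>N. y < ereal (gromov_product d w (xs i) (ys j)))" for y
    unfolding eventually_prod_sequentially by auto
  then show ?thesis unfolding pair_liminf_def le_Liminf_iff by simp
qed

lemma seq_equiv_iff:
  "seq_equiv d w xs ys \<longleftrightarrow> (\<forall>M. \<exists>N. \<forall>i\<ge>N. \<forall>j\<ge>N. M \<le> gromov_product d w (xs i) (ys j))"
proof -
  have "seq_equiv d w xs ys \<longleftrightarrow> \<infinity> \<le> pair_liminf d w xs ys"
    unfolding seq_equiv_def pair_liminf_def by auto
  also have "\<dots> \<longleftrightarrow> (\<forall>M. \<exists>N. \<forall>i\<ge>N. \<forall>j\<ge>N. M \<le> gromov_product d w (xs i) (ys j))"
    unfolding le_pair_liminf_iff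
  proof (intro iffI allI impI)
    fix M :: real assume large: "\<forall>y<\<infinity>. \<exists>N. \<forall>i\<ge>N. \<forall>j\<ge>N. y < ereal (gromov_product d w (xs i) (ys j))"
    obtain N where "\<forall>i\<ge>N. \<forall>j\<ge>N. ereal M < ereal (gromov_product d w (xs i) (ys j))"
      using large[rule_format, of "ereal M"] by auto
    then show "\<exists>N. \<forall>i\<ge>N. \<forall>j\<ge>N. M \<le> gromov_product d w (xs i) (ys j)" by (auto intro: less_imp_le)
  next
    fix y :: ereal assume large: "\<forall>M. \<exists>N. \<forall>i\<ge>N. \<forall>j\<ge>N. M \<le> gromov_product d w (xs i) (ys j)" and "y < \<infinity>"
    then obtain M :: real where M: "y < ereal M" by (cases y) (auto, meson gt_ex)
    obtain N where "\<forall>i\<ge>N. \<forall>j\<ge>N. M \<le> gromov_product d w (xs i) (ys j)" using large by blast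
    then show "\<exists>N. \<forall>i\<ge>N. \<forall>j\<ge>N. y < ereal (gromov_product d w (xs i) (ys j))"
      using M by (meson ereal_less_eq(3) less_le_trans)
  qed
  finally show ?thesis .
qed

lemma seq_equiv_eq_pair_liminf: "seq_equiv d w xs ys \<longleftrightarrow> pair_liminf d w xs ys = \<infinity>"
  unfolding seq_equiv_def pair_liminf_def ..

lemma conv_infty_iff: "conv_infty S d w xs \<longleftrightarrow> (\<forall>n. xs n \<in> S) \<and> seq_equiv d w xs xs"
  unfolding conv_infty_def seq_equiv_iff ..

lemma pair_liminf_commute:
  assumes "\<And>x y. d x y = d y x"
  shows "pair_liminf d w xs ys = pair_liminf d w ys xs"
proof -
  have "gromov_product d w x y = gromov_product d w y x" for x y
    unfolding gromov_product_def using assms by simp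
  then have "c \<le> pair_liminf d w xs ys \<longleftrightarrow> c \<le> pair_liminf d w ys xs" for c
    unfolding le_pair_liminf_iff by metis
  then show ?thesis by (meson order_antisym order_refl)
qed

lemma pair_liminf_mono:
  "(\<And>i j. gromov_product d w (xs i) (ys j) \<le> gromov_product d' w' (xs' i) (ys' j)) \<Longrightarrow>
   pair_liminf d w xs ys \<le> pair_liminf d' w' xs' ys'"
  unfolding pair_liminf_def by (intro Liminf_mono always_eventually) (auto split: prod.splits)

lemma pair_liminf_le_add:
  assumes "\<And>i j. gromov_product d' w' (xs' i) (ys' j) \<le> gromov_product d w (xs i) (ys j) + c"
  shows "pair_liminf d' w' xs' ys' \<le> pair_liminf d w xs ys + ereal c"
proof -
  have "sequentially \<times>\<^sub>F sequentially \<noteq> (bot :: (nat \<times> nat) filter)"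
    by (simp add: prod_filter_eq_bot)
  then have "Liminf (sequentially \<times>\<^sub>F sequentially)
      (\<lambda>ij. (\<lambda>(i, j). ereal (gromov_product d w (xs i) (ys j))) ij + ereal c) = pair_liminf d w xs ys + ereal c"
    unfolding pair_liminf_def by (rule Liminf_add_ereal_right) simp
  moreover have "pair_liminf d' w' xs' ys' \<le> Liminf (sequentially \<times>\<^sub>F sequentially)
      (\<lambda>ij. (\<lambda>(i, j). ereal (gromov_product d w (xs i) (ys j))) ij + ereal c)"
    unfolding pair_liminf_def using assms by (intro Liminf_mono always_eventually) (auto split: prod.splits)
  ultimately show ?thesis by simp
qed

lemma pair_liminf_nonneg:
  "(\<And>i j. 0 \<le> gromov_product d w (xs i) (ys j)) \<Longrightarrow> 0 \<le> pair_liminf d w xs ys"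
  unfolding pair_liminf_def by (intro Liminf_bounded always_eventually) (auto split: prod.splits)

lemma pair_liminf_ultrametric:
  assumes "\<And>i j k. min (gromov_product d w (xs i) (ys k)) (gromov_product d w (ys k) (zs j))
    \<le> gromov_product d w (xs i) (zs j)"
  shows "min (pair_liminf d w xs ys) (pair_liminf d w ys zs) \<le> pair_liminf d w xs zs"
  unfolding le_pair_liminf_iff
proof (intro allI impI)
  fix y assume "y < min (pair_liminf d w xs ys) (pair_liminf d w ys zs)"
  then obtain N1 N2 where N1: "\<forall>i\<ge>N1. \<forall>j\<ge>N1. y < ereal (gromov_product d w (xs i) (ys j))"
    and N2: "\<forall>i\<ge>N2. \<forall>j\<ge>N2. y < ereal (gromov_product d w (ys i) (zs j))"
    using le_pair_liminf_iff[of "pair_liminf d w xs ys" d w xs ys]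
      le_pair_liminf_iff[of "pair_liminf d w ys zs" d w ys zs] by (meson min.strict_boundedE order_refl)
  define N where "N = max N1 N2"
  have "y < ereal (gromov_product d w (xs i) (zs j))" if "i \<ge> N" "j \<ge> N" for i j
  proof -
    have "y < ereal (gromov_product d w (xs i) (ys N))" "y < ereal (gromov_product d w (ys N) (zs j))"
      using N1 N2 that unfolding N_def by auto
    then have "y < ereal (min (gromov_product d w (xs i) (ys N)) (gromov_product d w (ys N) (zs j)))"
      by (simp add: min_def)
    also have "\<dots> \<le> ereal (gromov_product d w (xs i) (zs j))" using assms[of i N j] by (simp add: min_def)
    finally show ?thesis .
  qed
  then show "\<exists>N. \<forall>i\<ge>N. \<forall>j\<ge>N. y < ereal (gromov_product d w (xs i) (zs j))" by blast
qed

locale gromov_hyperbolic_at =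
  fixes S :: "'a set" and d :: "'a \<Rightarrow> 'a \<Rightarrow> real" and w :: 'a and \<delta> :: real
  assumes commute: "\<And>x y. d x y = d y x"
    and hyperbolic: "\<And>x y z. x \<in> S \<Longrightarrow> y \<in> S \<Longrightarrow> z \<in> S \<Longrightarrow>
      min (gromov_product d w x y) (gromov_product d w y z) - \<delta> \<le> gromov_product d w x z"
begin

lemma seq_equiv_sym: "seq_equiv d w xs ys \<Longrightarrow> seq_equiv d w ys xs"
  unfolding seq_equiv_eq_pair_liminf using pair_liminf_commute[of d w xs ys, OF commute] by simp

lemma seq_equiv_trans:
  assumes S: "\<forall>n. xs n \<in> S" "\<forall>n. ys n \<in> S" "\<forall>n. zs n \<in> S"
    and xy: "seq_equiv d w xs ys" and yz: "seq_equiv d w ys zs"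
  shows "seq_equiv d w xs zs"
  unfolding seq_equiv_iff
proof
  fix M
  obtain N1 where N1: "\<forall>i\<ge>N1. \<forall>j\<ge>N1. M + \<delta> \<le> gromov_product d w (xs i) (ys j)"
    using xy unfolding seq_equiv_iff by blast
  obtain N2 where N2: "\<forall>i\<ge>N2. \<forall>j\<ge>N2. M + \<delta> \<le> gromov_product d w (ys i) (zs j)"
    using yz unfolding seq_equiv_iff by blast
  define N where "N = max N1 N2"
  have "M \<le> gromov_product d w (xs i) (zs j)" if "i \<ge> N" "j \<ge> N" for i j
  proof -
    have "M + \<delta> \<le> gromov_product d w (xs i) (ys N)" "M + \<delta> \<le> gromov_product d w (ys N) (zs j)"
      using N1 N2 that unfolding N_def by auto
    moreover have "min (gromov_product d w (xs i) (ys N)) (gromov_product d w (ys N) (zs j)) - \<delta>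
        \<le> gromov_product d w (xs i) (zs j)"
      using hyperbolic S by blast
    ultimately show ?thesis by linarith
  qed
  then show "\<exists>N. \<forall>i\<ge>N. \<forall>j\<ge>N. M \<le> gromov_product d w (xs i) (zs j)" by blast
qed

lemma boundary_point_self: "conv_infty S d w xs \<Longrightarrow> xs \<in> boundary_point S d w xs"
  unfolding boundary_point_def using conv_infty_iff[of S d w xs] by simp

lemma boundary_point_eq_iff:
  assumes xs: "conv_infty S d w xs" and ys: "conv_infty S d w ys"
  shows "boundary_point S d w xs = boundary_point S d w ys \<longleftrightarrow> seq_equiv d w xs ys"
proof
  assume "boundary_point S d w xs = boundary_point S d w ys"
  then show "seq_equiv d w xs ys" using boundary_point_self[OF ys] unfolding boundary_point_def by blast
next
  assume xy: "seq_equiv d w xs ys"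
  have S: "\<forall>n. xs n \<in> S" "\<forall>n. ys n \<in> S" using xs ys unfolding conv_infty_def by auto
  have "seq_equiv d w xs zs \<longleftrightarrow> seq_equiv d w ys zs" if "conv_infty S d w zs" for zs
  proof -
    have zs: "\<forall>n. zs n \<in> S" using that unfolding conv_infty_def by simp
    show ?thesis using seq_equiv_trans[OF S(2,1) zs seq_equiv_sym[OF xy]] seq_equiv_trans[OF S zs xy] by blast
  qed
  then show "boundary_point S d w xs = boundary_point S d w ys" unfolding boundary_point_def by blast
qed

lemma seq_boundary_memD:
  assumes "p \<in> seq_boundary S d w" "xs \<in> p"
  shows "conv_infty S d w xs" "p = boundary_point S d w xs"
proof -
  obtain zs where zs: "conv_infty S d w zs" "p = boundary_point S d w zs"
    using assms(1) unfolding seq_boundary_eq by blast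
  then show xs: "conv_infty S d w xs" using assms(2) unfolding boundary_point_def by blast
  have "seq_equiv d w zs xs" using assms(2) zs(2) unfolding boundary_point_def by blast
  then show "p = boundary_point S d w xs" using boundary_point_eq_iff[OF zs(1) xs] zs(2) by simp
qed

lemma seq_boundary_nonempty: "p \<in> seq_boundary S d w \<Longrightarrow> \<exists>xs. xs \<in> p"
  unfolding seq_boundary_eq using boundary_point_self by blast

end

lemma vis_pow_nonneg: "0 \<le> vis_pow a r"
  unfolding vis_pow_def by simp

lemma vis_pow_eq_0_iff: "1 < a \<Longrightarrow> vis_pow a r = 0 \<longleftrightarrow> r = \<infinity>"
  unfolding vis_pow_def by simp

lemma vis_pow_antimono:
  assumes a: "1 < a" and r: "0 \<le> r" "r \<le> r'"
  shows "vis_pow a r' \<le> vis_pow a r"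
proof (cases "r' = \<infinity>")
  case False
  then obtain x y where "r = ereal x" "r' = ereal y" using r by (cases r; cases r') auto
  then show ?thesis using a r unfolding vis_pow_def by (simp add: powr_mono)
qed (simp add: vis_pow_def)

lemma vis_pow_le_powr_mult:
  assumes a: "1 < a" and r: "0 \<le> r" "r \<le> r'" "r' \<le> r + ereal c"
  shows "vis_pow a r \<le> a powr c * vis_pow a r'"
proof (cases "r' = \<infinity>")
  case True
  then have "r = \<infinity>" using r(3) by (cases r) auto
  then show ?thesis unfolding vis_pow_def by simp
next
  case False
  then obtain x y where xy: "r = ereal x" "r' = ereal y" using r by (cases r; cases r') auto
  then have "a powr (- x) \<le> a powr (c + - y)" using a r(3) by (intro powr_mono) auto
  also have "\<dots> = a powr c * a powr (- y)" by (rule powr_add)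
  finally show ?thesis unfolding vis_pow_def using xy by simp
qed

lemma Metric_space_pullback:
  assumes "Metric_space B dB" "inj_on \<phi> A" "\<phi> ` A \<subseteq> B"
  shows "Metric_space A (\<lambda>p q. dB (\<phi> p) (\<phi> q))"
  using assms unfolding Metric_space_def inj_on_def by (simp add: image_subset_iff) metis

locale gromov_ultrametric_at =
  fixes S :: "'a set" and d :: "'a \<Rightarrow> 'a \<Rightarrow> real" and w :: 'a
  assumes commute: "\<And>x y. d x y = d y x"
    and nonneg: "\<And>x y. x \<in> S \<Longrightarrow> y \<in> S \<Longrightarrow> 0 \<le> gromov_product d w x y"
    and ultrametric: "\<And>x y z. x \<in> S \<Longrightarrow> y \<in> S \<Longrightarrow> z \<in> S \<Longrightarrow>
      min (gromov_product d w x y) (gromov_product d w y z) \<le> gromov_product d w x z"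
begin

sublocale gromov_hyperbolic_at S d w 0
  using commute ultrametric by unfold_locales auto

lemma pair_liminf_equiv_left:
  assumes "\<forall>n. xs n \<in> S" "\<forall>n. xs' n \<in> S" "\<forall>n. ys n \<in> S" and "seq_equiv d w xs xs'"
  shows "pair_liminf d w xs ys \<le> pair_liminf d w xs' ys"
proof -
  have "min (pair_liminf d w xs' xs) (pair_liminf d w xs ys) \<le> pair_liminf d w xs' ys"
    using assms(1-3) by (intro pair_liminf_ultrametric ultrametric) auto
  moreover have "pair_liminf d w xs' xs = \<infinity>"
    using seq_equiv_sym[OF assms(4)] unfolding seq_equiv_eq_pair_liminf .
  ultimately show ?thesis by simp
qed

lemma pair_liminf_equiv:
  assumes S: "\<forall>n. xs n \<in> S" "\<forall>n. xs' n \<in> S" "\<forall>n. ys n \<in> S" "\<forall>n. ys' n \<in> S"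
    and "seq_equiv d w xs xs'" "seq_equiv d w ys ys'"
  shows "pair_liminf d w xs ys = pair_liminf d w xs' ys'"
proof -
  note sym = seq_equiv_sym and swap = pair_liminf_commute[of d, OF commute]
  have "pair_liminf d w xs ys = pair_liminf d w xs' ys"
    using pair_liminf_equiv_left[OF S(1,2,3)] pair_liminf_equiv_left[OF S(2,1,3)] assms(5) sym
    by (meson order_antisym)
  also have "\<dots> = pair_liminf d w xs' ys'"
    using pair_liminf_equiv_left[OF S(3,4,2)] pair_liminf_equiv_left[OF S(4,3,2)] assms(6) sym swap
    by (metis order_antisym)
  finally show ?thesis .
qed

lemma boundary_product_representatives:
  assumes P: "P \<in> seq_boundary S d w" and Q: "Q \<in> seq_boundary S d w" and xs: "xs \<in> P" and ys: "ys \<in> Q"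
  shows "boundary_product d w P Q = pair_liminf d w xs ys"
proof -
  have "{pair_liminf d w xs' ys' | xs' ys'. xs' \<in> P \<and> ys' \<in> Q} = {pair_liminf d w xs ys}"
  proof (intro equalityI subsetI)
    fix v assume "v \<in> {pair_liminf d w xs' ys' | xs' ys'. xs' \<in> P \<and> ys' \<in> Q}"
    then obtain xs' ys' where v: "v = pair_liminf d w xs' ys'" "xs' \<in> P" "ys' \<in> Q" by blast
    have "conv_infty S d w xs" "conv_infty S d w ys" "conv_infty S d w xs'" "conv_infty S d w ys'"
      using seq_boundary_memD P Q xs ys v by blast+
    moreover have "seq_equiv d w xs xs'" "seq_equiv d w ys ys'"
      using seq_boundary_memD(2)[OF P xs] seq_boundary_memD(2)[OF Q ys] v unfolding boundary_point_def by blast+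
    ultimately have "pair_liminf d w xs ys = pair_liminf d w xs' ys'"
      unfolding conv_infty_def by (intro pair_liminf_equiv) auto
    then show "v \<in> {pair_liminf d w xs ys}" using v by simp
  qed (use xs ys in blast)
  then show ?thesis unfolding boundary_product_eq by simp
qed

lemma boundary_product_commute: "boundary_product d w P Q = boundary_product d w Q P"
  unfolding boundary_product_eq using pair_liminf_commute[of d, OF commute] by metis

lemma boundary_product_nonneg:
  assumes P: "P \<in> seq_boundary S d w" and Q: "Q \<in> seq_boundary S d w"
  shows "0 \<le> boundary_product d w P Q"
proof -
  obtain xs ys where xs: "xs \<in> P" and ys: "ys \<in> Q"
    using seq_boundary_nonempty[OF P] seq_boundary_nonempty[OF Q] by blast
  have "conv_infty S d w xs" "conv_infty S d w ys"
    using seq_boundary_memD(1)[OF P xs] seq_boundary_memD(1)[OF Q ys] .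
  then have "0 \<le> pair_liminf d w xs ys"
    using nonneg unfolding conv_infty_def by (intro pair_liminf_nonneg) blast
  then show ?thesis using boundary_product_representatives[OF P Q xs ys] by simp
qed

lemma boundary_product_eq_infinity_iff:
  assumes P: "P \<in> seq_boundary S d w" and Q: "Q \<in> seq_boundary S d w"
  shows "boundary_product d w P Q = \<infinity> \<longleftrightarrow> P = Q"
proof -
  obtain xs ys where xs: "xs \<in> P" and ys: "ys \<in> Q"
    using seq_boundary_nonempty[OF P] seq_boundary_nonempty[OF Q] by blast
  have cx: "conv_infty S d w xs" "P = boundary_point S d w xs" using seq_boundary_memD[OF P xs] by blast+
  have cy: "conv_infty S d w ys" "Q = boundary_point S d w ys" using seq_boundary_memD[OF Q ys] by blast+
  show ?thesis
    unfolding boundary_product_representatives[OF P Q xs ys] seq_equiv_eq_pair_liminf[symmetric]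
    using boundary_point_eq_iff[OF cx(1) cy(1)] cx(2) cy(2) by simp
qed

lemma boundary_product_ultrametric:
  assumes P: "P \<in> seq_boundary S d w" and Q: "Q \<in> seq_boundary S d w" and R: "R \<in> seq_boundary S d w"
  shows "min (boundary_product d w P Q) (boundary_product d w Q R) \<le> boundary_product d w P R"
proof -
  obtain xs ys zs where xs: "xs \<in> P" and ys: "ys \<in> Q" and zs: "zs \<in> R"
    using seq_boundary_nonempty[OF P] seq_boundary_nonempty[OF Q] seq_boundary_nonempty[OF R] by blast
  have "conv_infty S d w xs" "conv_infty S d w ys" "conv_infty S d w zs"
    using seq_boundary_memD(1)[OF P xs] seq_boundary_memD(1)[OF Q ys] seq_boundary_memD(1)[OF R zs] .
  then have "\<forall>n. xs n \<in> S" "\<forall>n. ys n \<in> S" "\<forall>n. zs n \<in> S" unfolding conv_infty_def by simp_all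
  then have "min (pair_liminf d w xs ys) (pair_liminf d w ys zs) \<le> pair_liminf d w xs zs"
    by (intro pair_liminf_ultrametric ultrametric) auto
  then show ?thesis
    using boundary_product_representatives[OF P Q xs ys] boundary_product_representatives[OF Q R ys zs]
      boundary_product_representatives[OF P R xs zs] by simp
qed

lemma visual_ultrametric:
  assumes a: "1 < a"
  shows "Metric_space (seq_boundary S d w) (\<lambda>P Q. vis_pow a (boundary_product d w P Q))"
proof
  fix P Q show "vis_pow a (boundary_product d w P Q) = vis_pow a (boundary_product d w Q P)"
    using boundary_product_commute by simp
next
  fix P Q assume "P \<in> seq_boundary S d w" "Q \<in> seq_boundary S d w"
  then show "vis_pow a (boundary_product d w P Q) = 0 \<longleftrightarrow> P = Q"
    using vis_pow_eq_0_iff[OF a] boundary_product_eq_infinity_iff by simp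
next
  fix P Q R assume PQR: "P \<in> seq_boundary S d w" "Q \<in> seq_boundary S d w" "R \<in> seq_boundary S d w"
  note ultra = boundary_product_ultrametric[OF PQR]
    and nonneg = boundary_product_nonneg[OF PQR(1,2)] boundary_product_nonneg[OF PQR(2,3)]
  show "vis_pow a (boundary_product d w P R)
    \<le> vis_pow a (boundary_product d w P Q) + vis_pow a (boundary_product d w Q R)"
  proof (cases "boundary_product d w P Q \<le> boundary_product d w Q R")
    case True
    then have "vis_pow a (boundary_product d w P R) \<le> vis_pow a (boundary_product d w P Q)"
      using ultra nonneg by (intro vis_pow_antimono[OF a]) (auto simp: min_def)
    then show ?thesis using vis_pow_nonneg[of a "boundary_product d w Q R"] by linarith
  next
    case False
    then have "vis_pow a (boundary_product d w P R) \<le> vis_pow a (boundary_product d w Q R)"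
      using ultra nonneg by (intro vis_pow_antimono[OF a]) (auto simp: min_def)
    then show ?thesis using vis_pow_nonneg[of a "boundary_product d w P Q"] by linarith
  qed
qed (rule vis_pow_nonneg)

end

locale boundary_comparison = target: gromov_ultrametric_at T d' w'
  for T :: "'t set" and d' :: "'t \<Rightarrow> 't \<Rightarrow> real" and w' :: 't +
  fixes S :: "'a set" and d :: "'a \<Rightarrow> 'a \<Rightarrow> real" and w :: 'a and h :: "'a \<Rightarrow> 't" and c :: real
  assumes commute: "\<And>x y. d x y = d y x"
    and nonneg: "\<And>x y. x \<in> S \<Longrightarrow> y \<in> S \<Longrightarrow> 0 \<le> gromov_product d w x y"
    and onto: "h ` S = T" and c_nonneg: "0 \<le> c"
    and comparable: "\<And>x y. x \<in> S \<Longrightarrow> y \<in> S \<Longrightarrow>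
      gromov_product d w x y \<le> gromov_product d' w' (h x) (h y) \<and>
      gromov_product d' w' (h x) (h y) \<le> gromov_product d w x y + c"
begin

sublocale source: gromov_hyperbolic_at S d w c
proof
  fix x y z assume "x \<in> S" "y \<in> S" "z \<in> S"
  moreover have "h x \<in> T" "h y \<in> T" "h z \<in> T" using onto calculation by auto
  ultimately show "min (gromov_product d w x y) (gromov_product d w y z) - c \<le> gromov_product d w x z"
    using target.ultrametric[of "h x" "h y" "h z"] comparable[of x y] comparable[of y z] comparable[of x z]
    by linarith
qed (rule commute)

lemma seq_equiv_map_iff:
  assumes "\<forall>n. xs n \<in> S" "\<forall>n. ys n \<in> S"
  shows "seq_equiv d' w' (h \<circ> xs) (h \<circ> ys) \<longleftrightarrow> seq_equiv d w xs ys"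
proof -
  have below: "gromov_product d w (xs i) (ys j) \<le> gromov_product d' w' (h (xs i)) (h (ys j))"
    and above: "gromov_product d' w' (h (xs i)) (h (ys j)) \<le> gromov_product d w (xs i) (ys j) + c" for i j
    using comparable assms by blast+
  show ?thesis unfolding seq_equiv_iff comp_def
  proof (intro iffI allI)
    fix M assume "\<forall>M. \<exists>N. \<forall>i\<ge>N. \<forall>j\<ge>N. M \<le> gromov_product d' w' (h (xs i)) (h (ys j))"
    then obtain N where "\<forall>i\<ge>N. \<forall>j\<ge>N. M + c \<le> gromov_product d' w' (h (xs i)) (h (ys j))" by blast
    then show "\<exists>N. \<forall>i\<ge>N. \<forall>j\<ge>N. M \<le> gromov_product d w (xs i) (ys j)"
      using above by (meson add_le_cancel_right order_trans)
  next
    fix M assume "\<forall>M. \<exists>N. \<forall>i\<ge>N. \<forall>j\<ge>N. M \<le> gromov_product d w (xs i) (ys j)"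
    then obtain N where "\<forall>i\<ge>N. \<forall>j\<ge>N. M \<le> gromov_product d w (xs i) (ys j)" by blast
    then show "\<exists>N. \<forall>i\<ge>N. \<forall>j\<ge>N. M \<le> gromov_product d' w' (h (xs i)) (h (ys j))"
      using below by (meson order_trans)
  qed
qed

lemma conv_infty_map_iff:
  "\<forall>n. xs n \<in> S \<Longrightarrow> conv_infty T d' w' (h \<circ> xs) \<longleftrightarrow> conv_infty S d w xs"
  unfolding conv_infty_iff using seq_equiv_map_iff onto by auto

definition boundary_map :: "(nat \<Rightarrow> 'a) set \<Rightarrow> (nat \<Rightarrow> 't) set" where
  "boundary_map p = boundary_point T d' w' (h \<circ> (SOME xs. xs \<in> p))"

lemma boundary_map_representative:
  assumes p: "p \<in> seq_boundary S d w" and xs: "xs \<in> p"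
  shows "boundary_map p = boundary_point T d' w' (h \<circ> xs)"
proof -
  define xs' where "xs' = (SOME xs. xs \<in> p)"
  have "xs' \<in> p" unfolding xs'_def using xs by (rule someI[where P="\<lambda>xs. xs \<in> p"])
  have cx: "conv_infty S d w xs" "p = boundary_point S d w xs" using source.seq_boundary_memD[OF p xs] by blast+
  have cx': "conv_infty S d w xs'" "p = boundary_point S d w xs'"
    using source.seq_boundary_memD[OF p \<open>xs' \<in> p\<close>] by blast+
  have S: "\<forall>n. xs n \<in> S" "\<forall>n. xs' n \<in> S" using cx(1) cx'(1) unfolding conv_infty_def by blast+
  have "seq_equiv d w xs' xs" using source.boundary_point_eq_iff[OF cx'(1) cx(1)] cx(2) cx'(2) by simp
  then have "seq_equiv d' w' (h \<circ> xs') (h \<circ> xs)" using seq_equiv_map_iff[OF S(2,1)] by simp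
  then show ?thesis
    using target.boundary_point_eq_iff conv_infty_map_iff S cx(1) cx'(1) unfolding boundary_map_def xs'_def
    by metis
qed

lemma boundary_map_in_boundary:
  assumes p: "p \<in> seq_boundary S d w" and xs: "xs \<in> p"
  shows "h \<circ> xs \<in> boundary_map p" "boundary_map p \<in> seq_boundary T d' w'"
proof -
  have cx: "conv_infty S d w xs" using source.seq_boundary_memD(1)[OF p xs] .
  then have "\<forall>n. xs n \<in> S" unfolding conv_infty_def by simp
  then have "conv_infty T d' w' (h \<circ> xs)" using conv_infty_map_iff cx by blast
  then show "h \<circ> xs \<in> boundary_map p" "boundary_map p \<in> seq_boundary T d' w'"
    unfolding boundary_map_representative[OF p xs] seq_boundary_eq using target.boundary_point_self by blast+
qed

lemma boundary_map_bij: "bij_betw boundary_map (seq_boundary S d w) (seq_boundary T d' w')"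
proof (rule bij_betw_imageI)
  show "inj_on boundary_map (seq_boundary S d w)"
  proof (rule inj_onI)
    fix p q assume p: "p \<in> seq_boundary S d w" and q: "q \<in> seq_boundary S d w"
      and eq: "boundary_map p = boundary_map q"
    obtain xs ys where xs: "xs \<in> p" and ys: "ys \<in> q"
      using source.seq_boundary_nonempty[OF p] source.seq_boundary_nonempty[OF q] by blast
    have cx: "conv_infty S d w xs" "p = boundary_point S d w xs" using source.seq_boundary_memD[OF p xs] by blast+
    have cy: "conv_infty S d w ys" "q = boundary_point S d w ys" using source.seq_boundary_memD[OF q ys] by blast+
    have S: "\<forall>n. xs n \<in> S" "\<forall>n. ys n \<in> S" using cx(1) cy(1) unfolding conv_infty_def by blast+
    have "boundary_point T d' w' (h \<circ> xs) = boundary_point T d' w' (h \<circ> ys)"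
      using eq boundary_map_representative[OF p xs] boundary_map_representative[OF q ys] by simp
    then have "seq_equiv d w xs ys"
      using target.boundary_point_eq_iff conv_infty_map_iff seq_equiv_map_iff S cx(1) cy(1) by metis
    then show "p = q" using source.boundary_point_eq_iff[OF cx(1) cy(1)] cx(2) cy(2) by simp
  qed
next
  show "boundary_map ` seq_boundary S d w = seq_boundary T d' w'"
  proof (intro equalityI subsetI)
    fix P assume "P \<in> boundary_map ` seq_boundary S d w"
    then show "P \<in> seq_boundary T d' w'" using boundary_map_in_boundary source.seq_boundary_nonempty by blast
  next
    fix P assume P: "P \<in> seq_boundary T d' w'"
    then obtain zs where zs: "conv_infty T d' w' zs" "P = boundary_point T d' w' zs"
      unfolding seq_boundary_eq by blast
    have "zs n \<in> h ` S" for n using zs(1) onto unfolding conv_infty_def by simp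
    then have "\<forall>n. \<exists>x. x \<in> S \<and> h x = zs n" by (metis imageE)
    then obtain xs where xs: "\<forall>n. xs n \<in> S" "h \<circ> xs = zs" by (metis comp_apply ext)
    then have cx: "conv_infty S d w xs" using conv_infty_map_iff[OF xs(1)] zs(1) by simp
    then have "boundary_point S d w xs \<in> seq_boundary S d w" unfolding seq_boundary_eq by blast
    moreover have "boundary_map (boundary_point S d w xs) = P"
      using boundary_map_representative[OF calculation source.boundary_point_self[OF cx]] zs(2) xs(2) by simp
    ultimately show "P \<in> boundary_map ` seq_boundary S d w" by blast
  qed
qed

lemma boundary_product_le_map:
  assumes p: "p \<in> seq_boundary S d w" and q: "q \<in> seq_boundary S d w"
  shows "boundary_product d w p q \<le> boundary_product d' w' (boundary_map p) (boundary_map q)"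
  unfolding boundary_product_eq[of d w]
proof (rule Sup_least)
  fix v assume "v \<in> {pair_liminf d w xs ys | xs ys. xs \<in> p \<and> ys \<in> q}"
  then obtain xs ys where v: "v = pair_liminf d w xs ys" and xs: "xs \<in> p" and ys: "ys \<in> q" by blast
  have "\<forall>n. xs n \<in> S" "\<forall>n. ys n \<in> S"
    using source.seq_boundary_memD(1)[OF p xs] source.seq_boundary_memD(1)[OF q ys] unfolding conv_infty_def by blast+
  then have "v \<le> pair_liminf d' w' (h \<circ> xs) (h \<circ> ys)"
    unfolding v by (intro pair_liminf_mono) (simp add: comparable)
  also have "\<dots> = boundary_product d' w' (boundary_map p) (boundary_map q)"
    using target.boundary_product_representatives boundary_map_in_boundary[OF p xs] boundary_map_in_boundary[OF q ys]
    by metis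
  finally show "v \<le> boundary_product d' w' (boundary_map p) (boundary_map q)" .
qed

lemma boundary_product_map_le:
  assumes p: "p \<in> seq_boundary S d w" and q: "q \<in> seq_boundary S d w"
  shows "boundary_product d' w' (boundary_map p) (boundary_map q) \<le> boundary_product d w p q + ereal c"
proof -
  obtain xs ys where xs: "xs \<in> p" and ys: "ys \<in> q"
    using source.seq_boundary_nonempty[OF p] source.seq_boundary_nonempty[OF q] by blast
  have "\<forall>n. xs n \<in> S" "\<forall>n. ys n \<in> S"
    using source.seq_boundary_memD(1)[OF p xs] source.seq_boundary_memD(1)[OF q ys] unfolding conv_infty_def by blast+
  have "boundary_product d' w' (boundary_map p) (boundary_map q) = pair_liminf d' w' (h \<circ> xs) (h \<circ> ys)"
    using target.boundary_product_representatives boundary_map_in_boundary[OF p xs] boundary_map_in_boundary[OF q ys]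
    by metis
  also have "\<dots> \<le> pair_liminf d w xs ys + ereal c"
    by (intro pair_liminf_le_add) (simp add: comparable \<open>\<forall>n. xs n \<in> S\<close> \<open>\<forall>n. ys n \<in> S\<close>)
  also have "pair_liminf d w xs ys \<le> boundary_product d w p q"
    unfolding boundary_product_eq using xs ys by (intro Sup_upper) blast
  then have "pair_liminf d w xs ys + ereal c \<le> boundary_product d w p q + ereal c" by (rule add_right_mono)
  finally show ?thesis .
qed

lemma boundary_product_nonneg:
  assumes p: "p \<in> seq_boundary S d w" and q: "q \<in> seq_boundary S d w"
  shows "0 \<le> boundary_product d w p q"
proof -
  obtain xs ys where xs: "xs \<in> p" and ys: "ys \<in> q"
    using source.seq_boundary_nonempty[OF p] source.seq_boundary_nonempty[OF q] by blast
  have "\<forall>n. xs n \<in> S" "\<forall>n. ys n \<in> S"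
    using source.seq_boundary_memD(1)[OF p xs] source.seq_boundary_memD(1)[OF q ys] unfolding conv_infty_def by blast+
  then have "0 \<le> pair_liminf d w xs ys" by (intro pair_liminf_nonneg) (simp add: nonneg)
  also have "\<dots> \<le> boundary_product d w p q"
    unfolding boundary_product_eq using xs ys by (intro Sup_upper) blast
  finally show ?thesis .
qed

lemma visual_metric_boundary_map:
  assumes a: "1 < a"
  shows "visual_metric S d w a (\<lambda>p q. vis_pow a (boundary_product d' w' (boundary_map p) (boundary_map q)))"
proof -
  let ?dB = "\<lambda>p q. vis_pow a (boundary_product d' w' (boundary_map p) (boundary_map q))"
  have "Metric_space (seq_boundary S d w) ?dB"
    using Metric_space_pullback[OF target.visual_ultrametric[OF a]] boundary_map_bij
    unfolding bij_betw_def by blast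
  moreover have "vis_pow a (boundary_product d w p q) / a powr c \<le> ?dB p q \<and>
      ?dB p q \<le> a powr c * vis_pow a (boundary_product d w p q)"
    if p: "p \<in> seq_boundary S d w" and q: "q \<in> seq_boundary S d w" for p q
  proof -
    note bounds = boundary_product_nonneg[OF p q] boundary_product_le_map[OF p q] boundary_product_map_le[OF p q]
    have K: "1 \<le> a powr c" using a c_nonneg by (simp add: ge_one_powr_ge_zero)
    have "vis_pow a (boundary_product d w p q) \<le> a powr c * ?dB p q"
      by (rule vis_pow_le_powr_mult[OF a bounds])
    then have "vis_pow a (boundary_product d w p q) / a powr c \<le> ?dB p q"
      using a by (simp add: pos_divide_le_eq mult.commute)
    moreover have "?dB p q \<le> vis_pow a (boundary_product d w p q)"
      by (rule vis_pow_antimono[OF a bounds(1,2)])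
    then have "?dB p q \<le> a powr c * vis_pow a (boundary_product d w p q)"
      using mult_right_mono[OF K vis_pow_nonneg] by (simp add: order_trans)
    ultimately show ?thesis ..
  qed
  moreover have "1 \<le> a powr c" using a c_nonneg by (simp add: ge_one_powr_ge_zero)
  ultimately show ?thesis unfolding visual_metric_def by blast
qed

lemma visual_metric_isometric_to_target:
  assumes "1 < a"
  shows "\<exists>dB. visual_metric S d w a dB \<and>
    isometric_spaces (seq_boundary S d w) dB (seq_boundary T d' w') (\<lambda>P Q. vis_pow a (boundary_product d' w' P Q))"
  using visual_metric_boundary_map[OF assms] boundary_map_bij unfolding isometric_spaces_def by blast

end

section \<open>The boundary of a quasi-tree\<close>

lemma (in pointed_metric_space) ea_tree_boundary_comparison:
  assumes c: "0 \<le> c"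
    and bound: "\<And>x y. x \<in> X \<Longrightarrow> y \<in> X \<Longrightarrow> chain_product X d x0 x y \<le> gp x y + c"
  shows "boundary_comparison (ea_tree X d x0) (ea_metric X d x0) (ea_cls x0) X d x0 ea_cls c"
proof -
  have target: "gromov_ultrametric_at (ea_tree X d x0) (ea_metric X d x0) (ea_cls x0)"
  proof
    fix P Q assume "P \<in> ea_tree X d x0" "Q \<in> ea_tree X d x0"
    then obtain x y where xy: "x \<in> X" "y \<in> X" "P = ea_cls x" "Q = ea_cls y" unfolding ea_tree_def by blast
    have "0 \<le> gp x y" using gromov_product_nonneg[OF basepoint xy(1,2)] .
    also have "\<dots> \<le> chain_product X d x0 x y" by (rule gromov_product_le_chain_product[OF xy(1,2)])
    finally show "0 \<le> gromov_product (ea_metric X d x0) (ea_cls x0) P Q"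
      using ea_tree_gromov_product[OF xy(1,2)] xy(3,4) by simp
  next
    fix P Q R assume "P \<in> ea_tree X d x0" "Q \<in> ea_tree X d x0" "R \<in> ea_tree X d x0"
    then obtain x y z where xyz: "x \<in> X" "y \<in> X" "z \<in> X" "P = ea_cls x" "Q = ea_cls y" "R = ea_cls z"
      unfolding ea_tree_def by blast
    show "min (gromov_product (ea_metric X d x0) (ea_cls x0) P Q) (gromov_product (ea_metric X d x0) (ea_cls x0) Q R)
        \<le> gromov_product (ea_metric X d x0) (ea_cls x0) P R"
      using chain_product_ultrametric[OF xyz(1-3)] ea_tree_gromov_product xyz by simp
  qed (rule ea_metric_commute)
  have "boundary_comparison_axioms (ea_tree X d x0) (ea_metric X d x0) (ea_cls x0) X d x0 ea_cls c"
  proof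
    fix x y assume "x \<in> X" "y \<in> X"
    then show "gp x y \<le> gromov_product (ea_metric X d x0) (ea_cls x0) (ea_cls x) (ea_cls y) \<and>
        gromov_product (ea_metric X d x0) (ea_cls x0) (ea_cls x) (ea_cls y) \<le> gp x y + c"
      using ea_tree_gromov_product gromov_product_le_chain_product bound by simp
  qed (use commute gromov_product_nonneg basepoint c in \<open>simp_all add: ea_tree_def\<close>)
  with target show ?thesis by (rule boundary_comparison.intro)
qed

theorem corollary6p36:
  fixes X :: "'a set" and d :: "'a \<Rightarrow> 'a \<Rightarrow> real" and x0 :: 'a
    and V :: "'b set" and E :: "'b \<Rightarrow> 'b \<Rightarrow> bool"
  assumes "Metric_space X d" and "geodesic_space X d"
    and "simplicial_tree V E" and "quasi_isometric X d V (graph_dist E)"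
    and "x0 \<in> X"
  shows "\<forall>a::real. a > 1 \<longrightarrow> (\<exists>dB. visual_metric X d x0 a dB \<and>
           isometric_spaces (seq_boundary X d x0) dB
             (seq_boundary (ea_tree X d x0) (ea_metric X d x0) (ea_class X d x0 x0))
             (\<lambda>p q. vis_pow a (boundary_product (ea_metric X d x0) (ea_class X d x0 x0) p q)))"
proof -
  obtain c where c: "0 \<le> c"
    "\<And>x y. x \<in> X \<Longrightarrow> y \<in> X \<Longrightarrow> chain_product X d x0 x y \<le> gromov_product d x0 x y + c"
    using quasi_tree_chain_product_bound[OF assms] by blast
  interpret pointed_metric_space X d x0
    using assms(1,5) by (simp add: pointed_metric_space_def pointed_metric_space_axioms_def)
  interpret boundary_comparison "ea_tree X d x0" "ea_metric X d x0" "ea_cls x0" X d x0 ea_cls c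
    using ea_tree_boundary_comparison c by blast
  show ?thesis using visual_metric_isometric_to_target by blast
qed

end
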